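(* Suppose $K^0\in\mathbb{K}$. For any step size $$0<\eta\le\frac12\Big(\|R\|_{\max}+\frac{\|B\|_{\max}^2C(K^0)}{\mu}\Big)^{-1},$$ the iterates of the natural policy gradient method $K^{n+1}=K^n-\eta\nabla C(K^n)(\mathbf{X}^{K^n})^{-1}=K^n-2\eta L^{K^n}$ all lie in $\mathbb{K}$ and satisfy, for all $n\ge0$, $$C(K^n)-C(K^* )\le\Big(1-\frac{2\mu\Lambda_{\min}(R)}{\|\mathbf{X}^{K^*}\|_{\max}}\eta\Big)^n\big(C(K^0)-C(K^* )\big).$$
   Context: Let $N_s\ge 1$, $\Omega=\{1,\dots,N_s\}$; tuples $V=(V_1,\dots,V_{N_s})$ of matrices are combined componentwise, $\|V\|_{\max}=\max_i\|V_i\|$ (spectral norm), $\Lambda_{\min}(V)=\min_i\sigma_{\min}(V_i)$. Markovian jump linear system: $x_{t+1}=A_{\omega(t)}x_t+B_{\omega(t)}u_t$, $A_i\in\mathbb{R}^{d\times d}$, $B_i\in\mathbb{R}^{d\times k}$, $B=(B_i)$; $\{\omega(t)\}$ is a time-homogeneous Markov chain on $\Omega$ with transition probabilities $p_{ij}$ and initial distribution $\pi$ with $\pi_i>0$; $x_0$ is random, independent of the chain, with $\mathbb{E}[x_0x_0^T]\succ0$. The system is mean-square stabilizable. $Q=(Q_i)\succ0$, $R=(R_i)\succ0$. For $K=(K_i)$, $K_i\in\mathbb{R}^{k\times d}$, $u_t=-K_{\omega(t)}x_t$ and $C(K)=\mathbb{E}[\sum_{t\ge0}x_t^TQ_{\omega(t)}x_t+u_t^TR_{\omega(t)}u_t]$.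 $\mathbb{K}$ is the set of $K$ making the closed loop $x_{t+1}=\Gamma_{\omega(t)}x_t$, $\Gamma_i=A_i-B_iK_i$, mean-square stable (equivalently $C(K)<\infty$); $\nabla C(K)$ is the gradient of $C$ on $\mathbb{K}$ w.r.t. $\langle V,S\rangle=\sum_i\mathrm{tr}(V_i^TS_i)$. $K^*$ is the optimal gain minimizing $C$ over $\mathbb{K}$. $\mathcal{E}_i(V)=\sum_jp_{ij}V_j$; $\mathcal{T}_j(V)=\sum_ip_{ij}\Gamma_iV_i\Gamma_i^T$. For $K\in\mathbb{K}$: $P^K$ solves $P_i^K=Q_i+K_i^TR_iK_i+\Gamma_i^T\mathcal{E}_i(P^K)\Gamma_i$; $L_i^K=(R_i+B_i^T\mathcal{E}_i(P^K)B_i)K_i-B_i^T\mathcal{E}_i(P^K)A_i$; $X_i(0)=\mathbb{E}[x_0x_0^T\mathbf{1}\{\omega(0)=i\}]$, $\mathbf{X}^K=\sum_{t\ge0}\mathcal{T}^t(X(0))$. $\mu=\min_i\pi_i\,\sigma_{\min}(\mathbb{E}[x_0x_0^T])$. *)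

theory Defs
  imports "HOL-Analysis.Analysis"
begin

text \<open>Markovian jump linear system with modes given by a finite type 's.
  Matrices are real^'n^'m. Tuples of matrices are functions 's => matrix.\<close>

definition psd_mat :: "real^'n^'n \<Rightarrow> bool" where
  "psd_mat M \<longleftrightarrow> transpose M = M \<and> (\<forall>x. 0 \<le> x \<bullet> (M *v x))"

definition pd_mat :: "real^'n^'n \<Rightarrow> bool" where
  "pd_mat M \<longleftrightarrow> transpose M = M \<and> (\<forall>x. x \<noteq> 0 \<longrightarrow> 0 < x \<bullet> (M *v x))"

definition spec_norm :: "real^'n^'m \<Rightarrow> real" where
  "spec_norm M = onorm (\<lambda>x. M *v x)"

definition sigma_min :: "real^'n^'m \<Rightarrow> real" where
  "sigma_min M = Inf {norm (M *v x) | x. norm x = 1}"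

definition max_norm :: "('s::finite \<Rightarrow> real^'n^'m) \<Rightarrow> real" where
  "max_norm V = Max (range (\<lambda>i. spec_norm (V i)))"

definition Lambda_min :: "('s::finite \<Rightarrow> real^'n^'m) \<Rightarrow> real" where
  "Lambda_min V = Min (range (\<lambda>i. sigma_min (V i)))"

definition Gam :: "('s \<Rightarrow> real^'d^'d) \<Rightarrow> ('s \<Rightarrow> real^'k^'d) \<Rightarrow> ('s \<Rightarrow> real^'d^'k) \<Rightarrow> 's \<Rightarrow> real^'d^'d" where
  "Gam A B K i = A i - B i ** K i"

definition Eop :: "('s::finite \<Rightarrow> 's \<Rightarrow> real) \<Rightarrow> ('s \<Rightarrow> real^'n^'m) \<Rightarrow> 's \<Rightarrow> real^'n^'m" where
  "Eop p V i = (\<Sum>j\<in>UNIV. p i j *\<^sub>R V j)"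

definition Top :: "('s::finite \<Rightarrow> real^'d^'d) \<Rightarrow> ('s \<Rightarrow> real^'k^'d) \<Rightarrow> ('s \<Rightarrow> 's \<Rightarrow> real)
    \<Rightarrow> ('s \<Rightarrow> real^'d^'k) \<Rightarrow> ('s \<Rightarrow> real^'d^'d) \<Rightarrow> 's \<Rightarrow> real^'d^'d" where
  "Top A B p K V j = (\<Sum>i\<in>UNIV. p i j *\<^sub>R (Gam A B K i ** V i ** transpose (Gam A B K i)))"

text \<open>X_i(0) = E[x0 x0^T 1{omega(0)=i}] = pi_i E[x0 x0^T] (x0 independent of the chain)\<close>
definition X0 :: "('s \<Rightarrow> real) \<Rightarrow> real^'d^'d \<Rightarrow> 's \<Rightarrow> real^'d^'d" where
  "X0 \<pi> \<Sigma> i = \<pi> i *\<^sub>R \<Sigma>"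

text \<open>second moments X_i(t) = E[x_t x_t^T 1{omega(t)=i}] of the closed loop\<close>
definition state_cov :: "('s::finite \<Rightarrow> real^'d^'d) \<Rightarrow> ('s \<Rightarrow> real^'k^'d) \<Rightarrow> ('s \<Rightarrow> 's \<Rightarrow> real)
    \<Rightarrow> ('s \<Rightarrow> real) \<Rightarrow> real^'d^'d \<Rightarrow> ('s \<Rightarrow> real^'d^'k) \<Rightarrow> nat \<Rightarrow> 's \<Rightarrow> real^'d^'d" where
  "state_cov A B p \<pi> \<Sigma> K t = (Top A B p K ^^ t) (X0 \<pi> \<Sigma>)"

text \<open>mean-square stability of the closed loop: E[x_t x_t^T 1{omega(t)=i}] -> 0
  for every admissible initial second-moment tuple (psd components)\<close>
definition ms_stable :: "('s::finite \<Rightarrow> real^'d^'d) \<Rightarrow> ('s \<Rightarrow> real^'k^'d) \<Rightarrow> ('s \<Rightarrow> 's \<Rightarrow> real)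
    \<Rightarrow> ('s \<Rightarrow> real^'d^'k) \<Rightarrow> bool" where
  "ms_stable A B p K \<longleftrightarrow>
     (\<forall>V. (\<forall>i. psd_mat (V i)) \<longrightarrow> (\<forall>i. (\<lambda>t. (Top A B p K ^^ t) V i) \<longlonglongrightarrow> 0))"

definition Kset :: "('s::finite \<Rightarrow> real^'d^'d) \<Rightarrow> ('s \<Rightarrow> real^'k^'d) \<Rightarrow> ('s \<Rightarrow> 's \<Rightarrow> real)
    \<Rightarrow> ('s \<Rightarrow> real^'d^'k) set" where
  "Kset A B p = {K. ms_stable A B p K}"

text \<open>cost C(K) = E[sum_t x_t^T Q x_t + u_t^T R u_t] with u_t = -K x_t, written via
  E[x_t^T M_{omega(t)} x_t] = sum_i tr(M_i X_i(t))\<close>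
definition cost :: "('s::finite \<Rightarrow> real^'d^'d) \<Rightarrow> ('s \<Rightarrow> real^'k^'d) \<Rightarrow> ('s \<Rightarrow> 's \<Rightarrow> real)
    \<Rightarrow> ('s \<Rightarrow> real) \<Rightarrow> real^'d^'d \<Rightarrow> ('s \<Rightarrow> real^'d^'d) \<Rightarrow> ('s \<Rightarrow> real^'k^'k)
    \<Rightarrow> ('s \<Rightarrow> real^'d^'k) \<Rightarrow> real" where
  "cost A B p \<pi> \<Sigma> Q R K =
     (\<Sum>t. \<Sum>i\<in>UNIV. trace ((Q i + transpose (K i) ** R i ** K i) ** state_cov A B p \<pi> \<Sigma> K t i))"

definition Pmat :: "('s::finite \<Rightarrow> real^'d^'d) \<Rightarrow> ('s \<Rightarrow> real^'k^'d) \<Rightarrow> ('s \<Rightarrow> 's \<Rightarrow> real)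
    \<Rightarrow> ('s \<Rightarrow> real^'d^'d) \<Rightarrow> ('s \<Rightarrow> real^'k^'k) \<Rightarrow> ('s \<Rightarrow> real^'d^'k) \<Rightarrow> 's \<Rightarrow> real^'d^'d" where
  "Pmat A B p Q R K = (THE P. \<forall>i. P i = Q i + transpose (K i) ** R i ** K i
        + transpose (Gam A B K i) ** Eop p P i ** Gam A B K i)"

definition Lmat :: "('s::finite \<Rightarrow> real^'d^'d) \<Rightarrow> ('s \<Rightarrow> real^'k^'d) \<Rightarrow> ('s \<Rightarrow> 's \<Rightarrow> real)
    \<Rightarrow> ('s \<Rightarrow> real^'d^'d) \<Rightarrow> ('s \<Rightarrow> real^'k^'k) \<Rightarrow> ('s \<Rightarrow> real^'d^'k) \<Rightarrow> 's \<Rightarrow> real^'d^'k" where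
  "Lmat A B p Q R K i =
     (R i + transpose (B i) ** Eop p (Pmat A B p Q R K) i ** B i) ** K i
     - transpose (B i) ** Eop p (Pmat A B p Q R K) i ** A i"

definition Xmat :: "('s::finite \<Rightarrow> real^'d^'d) \<Rightarrow> ('s \<Rightarrow> real^'k^'d) \<Rightarrow> ('s \<Rightarrow> 's \<Rightarrow> real)
    \<Rightarrow> ('s \<Rightarrow> real) \<Rightarrow> real^'d^'d \<Rightarrow> ('s \<Rightarrow> real^'d^'k) \<Rightarrow> 's \<Rightarrow> real^'d^'d" where
  "Xmat A B p \<pi> \<Sigma> K i = (\<Sum>t. state_cov A B p \<pi> \<Sigma> K t i)"

definition mu :: "('s::finite \<Rightarrow> real) \<Rightarrow> real^'d^'d \<Rightarrow> real" where
  "mu \<pi> \<Sigma> = Min (range (\<lambda>i. \<pi> i * sigma_min \<Sigma>))"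

primrec npg_iter :: "('s::finite \<Rightarrow> real^'d^'d) \<Rightarrow> ('s \<Rightarrow> real^'k^'d) \<Rightarrow> ('s \<Rightarrow> 's \<Rightarrow> real)
    \<Rightarrow> ('s \<Rightarrow> real^'d^'d) \<Rightarrow> ('s \<Rightarrow> real^'k^'k) \<Rightarrow> real \<Rightarrow> ('s \<Rightarrow> real^'d^'k)
    \<Rightarrow> nat \<Rightarrow> 's \<Rightarrow> real^'d^'k" where
  "npg_iter A B p Q R \<eta> K0 0 = K0"
| "npg_iter A B p Q R \<eta> K0 (Suc n) =
     (\<lambda>i. npg_iter A B p Q R \<eta> K0 n i - (2 * \<eta>) *\<^sub>R Lmat A B p Q R (npg_iter A B p Q R \<eta> K0 n) i)"

end

theory Submission
  imports Defs
begin

text \<open>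
  For a mean-square stabilising gain \<open>K\<close> the cost is
  \<open>C(K) = \<langle>P\<^sup>K, X(0)\<rangle> = \<langle>Q + K\<^sup>T R K, X\<^sup>K\<rangle>\<close>, where \<open>P\<^sup>K\<close> and \<open>X\<^sup>K\<close> are the geometrically
  convergent series of the mutually adjoint coupled Lyapunov operators \<open>L\<^sub>K\<close> and \<open>T\<^sub>K\<close>.
  Comparing two gains gives \<open>C(K') - C(K) = \<langle>A(K,K'), X\<^bsup>K'\<^esup>\<rangle>\<close>, where the advantage
  \<open>A(K,K')\<close> has quadratic form \<open>2 (\<Delta>K x) \<bullet> (L\<^sup>K x) + (\<Delta>K x) \<bullet> M (\<Delta>K x)\<close> with
  \<open>M = R + B\<^sup>T E(P\<^sup>K) B\<close> and \<open>\<Delta>K = K' - K\<close>.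
  Completing the square gives gradient domination
  \<open>C(K) - C(K\<^sup>*) \<le> \<parallel>X\<^bsup>K*\<^esup>\<parallel> / \<Lambda>\<^sub>m\<^sub>i\<^sub>n(R) \<Sum>\<^sub>i \<parallel>L\<^sub>i\<^sup>K\<parallel>\<^sub>F\<^sup>2\<close>.
  For the step \<open>K' = K - 2\<eta> L\<^sup>K\<close> with \<open>2\<eta>\<parallel>M\<parallel> \<le> 1\<close> the advantage is at most \<open>-2\<eta> (L\<^sup>K)\<^sup>T L\<^sup>K\<close>:
  hence \<open>P\<^sup>K\<close> is a Lyapunov function for \<open>K'\<close>, so \<open>K'\<close> is stabilising, and
  \<open>C(K') - C(K) \<le> -2\<eta>\<mu> \<Sum>\<^sub>i \<parallel>L\<^sub>i\<^sup>K\<parallel>\<^sub>F\<^sup>2\<close> because \<open>X\<^bsup>K'\<^esup> \<ge> \<mu> I\<close>. Together these give the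
  contraction factor. Costs decrease along the iteration, so
  \<open>\<parallel>M\<parallel> \<le> \<parallel>R\<parallel> + \<parallel>B\<parallel>\<^sup>2 C(K)/\<mu> \<le> \<parallel>R\<parallel> + \<parallel>B\<parallel>\<^sup>2 C(K\<^sup>0)/\<mu>\<close> keeps the step size admissible.
\<close>

section \<open>Matrix algebra\<close>

lemma matrix_add_rdistrib: "((A::real^'n^'m) + B) ** C = A ** C + B ** C"
  by (simp add: matrix_matrix_mult_def vec_eq_iff sum.distrib algebra_simps)

lemma matrix_diff_ldistrib: "(A::real^'n^'m) ** (B - C) = A ** B - A ** C"
  by (simp add: matrix_matrix_mult_def vec_eq_iff sum_subtractf algebra_simps)

lemma matrix_diff_rdistrib: "((A::real^'n^'m) - B) ** C = A ** C - B ** C"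
  by (simp add: matrix_matrix_mult_def vec_eq_iff sum_subtractf algebra_simps)

lemma matrix_scaleR_left: "(c *\<^sub>R (A::real^'n^'m)) ** B = c *\<^sub>R (A ** B)"
  by (simp add: matrix_matrix_mult_def vec_eq_iff sum_distrib_left algebra_simps)

lemma matrix_scaleR_right: "(A::real^'n^'m) ** (c *\<^sub>R B) = c *\<^sub>R (A ** B)"
  by (simp add: matrix_matrix_mult_def vec_eq_iff sum_distrib_left algebra_simps)

lemma matrix_sum_left: "(\<Sum>j\<in>S. f j) ** (C::real^'p^'n) = (\<Sum>j\<in>S. (f j :: real^'n^'m) ** C)"
  by (induction S rule: infinite_finite_induct) (auto simp: matrix_add_rdistrib)

lemma matrix_sum_right: "(C::real^'n^'m) ** (\<Sum>j\<in>S. f j) = (\<Sum>j\<in>S. C ** (f j :: real^'p^'n))"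
  by (induction S rule: infinite_finite_induct) (auto simp: matrix_add_ldistrib)

lemma transpose_add: "transpose ((A::real^'n^'m) + B) = transpose A + transpose B"
  by (simp add: transpose_def vec_eq_iff)

lemma transpose_diff: "transpose ((A::real^'n^'m) - B) = transpose A - transpose B"
  by (simp add: transpose_def vec_eq_iff)

lemma transpose_uminus: "transpose (- (A::real^'n^'m)) = - transpose A"
  by (simp add: transpose_def vec_eq_iff)

lemma transpose_zero: "transpose (0::real^'n^'m) = 0"
  by (simp add: transpose_def vec_eq_iff)

lemma trace_zero: "trace (0::real^'n^'n) = 0"
  by (simp add: trace_def)

lemma trace_scaleR: "trace (c *\<^sub>R (A::real^'n^'n)) = c * trace A"
  by (simp add: trace_def sum_distrib_left)

lemma trace_sum: "trace (\<Sum>j\<in>S. (f j::real^'n^'n)) = (\<Sum>j\<in>S. trace (f j))"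
  by (induction S rule: infinite_finite_induct) (auto simp: trace_add trace_zero)

lemma trace_matrix_mult_eq_sum: "trace ((X::real^'n^'n) ** Y) = (\<Sum>a\<in>UNIV. \<Sum>b\<in>UNIV. X $ a $ b * Y $ b $ a)"
  by (simp add: trace_def matrix_matrix_mult_def)

lemma matrix_vector_mult_sum_left: "(\<Sum>j\<in>S. (f j::real^'n^'m)) *v x = (\<Sum>j\<in>S. f j *v x)"
  by (induction S rule: infinite_finite_induct) (auto simp: matrix_vector_mult_add_rdistrib)

lemma matrix_vector_mult_scaleR_left: "(c *\<^sub>R (A::real^'n^'m)) *v x = c *\<^sub>R (A *v x)"
  by (simp add: matrix_vector_mult_def vec_eq_iff sum_distrib_left algebra_simps)

lemma matrix_vector_mult_uminus_left: "(- (A::real^'n^'m)) *v x = - (A *v x)"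
  by (simp add: matrix_vector_mult_def vec_eq_iff sum_negf)

lemma mat_mult_vector: "(mat c :: real^'n^'n) *v x = c *\<^sub>R x"
proof -
  have "(mat c :: real^'n^'n) = c *\<^sub>R mat 1" by (simp add: mat_def vec_eq_iff)
  then show ?thesis by (simp add: matrix_vector_mult_scaleR_left)
qed

lemma inner_matrix_transpose: "x \<bullet> ((A::real^'n^'m) *v y) = (transpose A *v x) \<bullet> y"
  by (metis dot_lmul_matrix transpose_matrix_vector transpose_transpose vector_transpose_matrix)

lemma inner_axis_matrix: "axis a 1 \<bullet> (M *v axis b 1) = (M::real^'n^'m) $ a $ b"
  by (simp add: inner_axis' matrix_vector_mul_component inner_axis)

lemma trace_congruence_swap:
  "trace (P ** (G ** V ** transpose G)) = trace ((transpose G ** P ** G) ** (V::real^'n^'n))"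
proof -
  have "trace (P ** (G ** V ** transpose G)) = trace ((P ** G ** V) ** transpose G)"
    by (simp add: matrix_mul_assoc)
  also have "\<dots> = trace (transpose G ** (P ** G ** V))" by (rule trace_mul_sym)
  also have "\<dots> = trace ((transpose G ** P ** G) ** V)" by (simp add: matrix_mul_assoc)
  finally show ?thesis .
qed

definition outer_prod :: "real^'n \<Rightarrow> real^'m \<Rightarrow> real^'m^'n" where
  "outer_prod v w = (\<chi> i j. v$i * w$j)"

lemma outer_prod_mult_vector: "outer_prod v w *v x = (w \<bullet> x) *\<^sub>R v"
  by (simp add: outer_prod_def matrix_vector_mult_def vec_eq_iff inner_vec_def sum_distrib_left
      algebra_simps)

lemma transpose_outer_prod: "transpose (outer_prod v w) = outer_prod w v"
  by (simp add: outer_prod_def transpose_def vec_eq_iff)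

lemma outer_prod_scaleR: "outer_prod (c *\<^sub>R v) (c *\<^sub>R v) = c\<^sup>2 *\<^sub>R outer_prod v v"
  by (simp add: outer_prod_def vec_eq_iff power2_eq_square algebra_simps)

lemma trace_outer_prod: "trace (outer_prod v w) = v \<bullet> w"
  by (simp add: trace_def outer_prod_def inner_vec_def)

lemma trace_mult_outer_prod: "trace (M ** outer_prod v w) = w \<bullet> (M *v v)"
  by (simp add: trace_def outer_prod_def matrix_matrix_mult_def matrix_vector_mult_def
      inner_vec_def sum_distrib_left mult_ac)

section \<open>Quadratic forms and positive semidefinite matrices\<close>

definition quad_form :: "real^'n^'n \<Rightarrow> real^'n \<Rightarrow> real" where
  "quad_form M x = x \<bullet> (M *v x)"

lemma quad_form_add: "quad_form (A + B) x = quad_form A x + quad_form B x"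
  by (simp add: quad_form_def matrix_vector_mult_add_rdistrib inner_add_right)

lemma quad_form_diff: "quad_form (A - B) x = quad_form A x - quad_form B x"
  by (simp add: quad_form_def matrix_vector_mult_diff_rdistrib inner_diff_right)

lemma quad_form_scaleR: "quad_form (c *\<^sub>R A) x = c * quad_form A x"
  by (simp add: quad_form_def matrix_vector_mult_scaleR_left)

lemma quad_form_sum: "quad_form (\<Sum>j\<in>S. f j) x = (\<Sum>j\<in>S. quad_form (f j) x)"
  by (simp add: quad_form_def matrix_vector_mult_sum_left inner_sum_right)

lemma quad_form_mat: "quad_form (mat c) x = c * (norm x)\<^sup>2"
  by (simp add: quad_form_def mat_mult_vector power2_norm_eq_inner)

lemma quad_form_outer_prod: "quad_form (outer_prod v v) x = (v \<bullet> x)\<^sup>2"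
  by (simp add: quad_form_def outer_prod_mult_vector power2_eq_square inner_commute)

lemma trace_mult_outer_prod_self: "trace (M ** outer_prod v v) = quad_form M v"
  by (simp add: trace_mult_outer_prod quad_form_def)

lemma quad_form_congruence: "quad_form (transpose G ** S ** G) x = quad_form S (G *v x)"
proof -
  have "(transpose G ** S ** G) *v x = transpose G *v (S *v (G *v x))"
    by (simp add: matrix_vector_mul_assoc matrix_mul_assoc)
  then show ?thesis unfolding quad_form_def by (simp only: inner_matrix_transpose transpose_transpose)
qed

lemma quad_form_congruence_transpose:
  "quad_form (G ** S ** transpose G) x = quad_form S (transpose G *v x)"
  using quad_form_congruence[of "transpose G" S x] by simp

lemma quad_form_transpose_mult_self: "quad_form (transpose L ** L) x = (norm ((L::real^'n^'m) *v x))\<^sup>2"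
  using quad_form_congruence[of L "mat 1" x] by (simp add: quad_form_mat)

lemma quad_form_scaleR_vector: "quad_form S (c *\<^sub>R x) = c\<^sup>2 * quad_form S x"
  by (simp add: quad_form_def matrix_vector_mult_scaleR power2_eq_square)

lemma quad_form_uminus_vector: "quad_form S (- x) = quad_form S x"
  using quad_form_scaleR_vector[of S "-1" x] by simp

lemma symmetric_inner_swap: "transpose (S::real^'n^'n) = S \<Longrightarrow> x \<bullet> (S *v y) = y \<bullet> (S *v x)"
  by (subst inner_matrix_transpose) (simp add: inner_commute)

lemma quad_form_add_vector:
  assumes "transpose (S::real^'n^'n) = S"
  shows "quad_form S (x + y) = quad_form S x + 2 * (y \<bullet> (S *v x)) + quad_form S y"
proof -
  have "x \<bullet> (S *v y) = y \<bullet> (S *v x)" by (rule symmetric_inner_swap[OF assms])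
  then show ?thesis
    by (simp add: quad_form_def matrix_vector_right_distrib inner_add_left inner_add_right)
qed

lemma quad_form_le_entry_sum:
  "quad_form M x \<le> (\<Sum>a\<in>UNIV. \<Sum>b\<in>UNIV. \<bar>M $ a $ b\<bar>) * (norm x)\<^sup>2"
proof -
  have "quad_form M x \<le> norm x * norm (M *v x)"
    unfolding quad_form_def by (rule norm_cauchy_schwarz)
  also have "\<dots> \<le> norm x * (onorm ((*v) M) * norm x)"
    by (intro mult_left_mono onorm matrix_vector_mul_bounded_linear) auto
  also have "\<dots> \<le> norm x * ((\<Sum>a\<in>UNIV. \<Sum>b\<in>UNIV. \<bar>M $ a $ b\<bar>) * norm x)"
    by (intro mult_left_mono mult_right_mono onorm_le_matrix_component_sum) auto
  finally show ?thesis by (simp add: power2_eq_square ac_simps)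
qed

lemma psd_mat_iff_quad_form: "psd_mat A \<longleftrightarrow> transpose A = A \<and> (\<forall>x. 0 \<le> quad_form A x)"
  by (simp add: psd_mat_def quad_form_def)

lemma psd_mat_quad_form_nonneg: "psd_mat A \<Longrightarrow> 0 \<le> quad_form A x"
  by (simp add: psd_mat_iff_quad_form)

lemma pd_imp_psd_mat: "pd_mat A \<Longrightarrow> psd_mat A"
  unfolding pd_mat_def psd_mat_def by (metis inner_zero_left less_eq_real_def)

lemma psd_mat_add: "psd_mat A \<Longrightarrow> psd_mat B \<Longrightarrow> psd_mat (A + B)"
  by (auto simp: psd_mat_iff_quad_form transpose_add quad_form_add)

lemma psd_mat_scaleR: "psd_mat A \<Longrightarrow> 0 \<le> c \<Longrightarrow> psd_mat (c *\<^sub>R A)"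
  by (auto simp: psd_mat_iff_quad_form transpose_scalar quad_form_scaleR)

lemma psd_mat_zero: "psd_mat 0"
  by (simp add: psd_mat_def transpose_zero)

lemma psd_mat_sum: "(\<And>j. j \<in> S \<Longrightarrow> psd_mat (f j)) \<Longrightarrow> psd_mat (\<Sum>j\<in>S. f j)"
  by (induction S rule: infinite_finite_induct) (auto simp: psd_mat_zero psd_mat_add)

lemma psd_mat_congruence: "psd_mat S \<Longrightarrow> psd_mat (transpose G ** S ** G)"
  by (auto simp: psd_mat_iff_quad_form matrix_transpose_mul matrix_mul_assoc quad_form_congruence)

lemma psd_mat_congruence_transpose: "psd_mat S \<Longrightarrow> psd_mat (G ** S ** transpose G)"
  using psd_mat_congruence[of S "transpose G"] by simp

lemma psd_mat_1: "psd_mat (mat 1)"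
  by (simp add: psd_mat_iff_quad_form quad_form_mat)

lemma psd_mat_transpose_mult_self: "psd_mat (transpose L ** L)"
  using psd_mat_congruence[OF psd_mat_1, of L] by simp

lemma symmetric_quad_form_zero_imp_zero:
  assumes "transpose (S::real^'n^'n) = S" "\<And>x. quad_form S x = 0"
  shows "S = 0"
proof -
  have "S *v x = 0" for x
  proof -
    have "quad_form S (x + S *v x) = quad_form S x + 2 * ((S *v x) \<bullet> (S *v x)) + quad_form S (S *v x)"
      by (rule quad_form_add_vector[OF assms(1)])
    then show ?thesis using assms(2) by simp
  qed
  then show ?thesis by (metis matrix_eq matrix_vector_mult_0)
qed

section \<open>Spectral norm and smallest singular value\<close>

lemma spec_norm_bound: "norm ((M::real^'n^'m) *v x) \<le> spec_norm M * norm x"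
  unfolding spec_norm_def using onorm[OF matrix_vector_mul_bounded_linear[of M]] by simp

lemma spec_norm_le: "(\<And>x. norm ((M::real^'n^'m) *v x) \<le> b * norm x) \<Longrightarrow> spec_norm M \<le> b"
  unfolding spec_norm_def by (rule onorm_le) simp

lemma spec_norm_nonneg: "0 \<le> spec_norm (M::real^'n^'m)"
  unfolding spec_norm_def using onorm_pos_le[OF matrix_vector_mul_bounded_linear[of M]] by simp

lemma spec_norm_zero: "spec_norm (0::real^'n^'m) = 0"
  by (rule antisym[OF spec_norm_le spec_norm_nonneg]) simp

lemma spec_norm_mult: "spec_norm ((A::real^'n^'m) ** B) \<le> spec_norm A * spec_norm (B::real^'p^'n)"
proof (rule spec_norm_le)
  fix x
  have "norm ((A ** B) *v x) = norm (A *v (B *v x))" by (simp add: matrix_vector_mul_assoc)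
  also have "\<dots> \<le> spec_norm A * norm (B *v x)" by (rule spec_norm_bound)
  also have "\<dots> \<le> spec_norm A * (spec_norm B * norm x)"
    by (intro mult_left_mono spec_norm_bound spec_norm_nonneg)
  finally show "norm ((A ** B) *v x) \<le> spec_norm A * spec_norm B * norm x" by (simp add: mult.assoc)
qed

lemma spec_norm_add: "spec_norm ((A::real^'n^'m) + B) \<le> spec_norm A + spec_norm B"
proof (rule spec_norm_le)
  fix x
  have "norm ((A + B) *v x) \<le> norm (A *v x) + norm (B *v x)"
    by (simp add: matrix_vector_mult_add_rdistrib norm_triangle_ineq)
  also have "\<dots> \<le> spec_norm A * norm x + spec_norm B * norm x"
    by (intro add_mono spec_norm_bound)
  finally show "norm ((A + B) *v x) \<le> (spec_norm A + spec_norm B) * norm x"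
    by (simp add: algebra_simps)
qed

lemma spec_norm_scaleR: "spec_norm (c *\<^sub>R (A::real^'n^'m)) \<le> \<bar>c\<bar> * spec_norm A"
proof (rule spec_norm_le)
  fix x
  have "norm ((c *\<^sub>R A) *v x) = \<bar>c\<bar> * norm (A *v x)"
    by (simp add: matrix_vector_mult_scaleR_left)
  also have "\<dots> \<le> \<bar>c\<bar> * (spec_norm A * norm x)"
    by (intro mult_left_mono spec_norm_bound) auto
  finally show "norm ((c *\<^sub>R A) *v x) \<le> \<bar>c\<bar> * spec_norm A * norm x" by (simp add: mult.assoc)
qed

lemma spec_norm_sum: "finite S \<Longrightarrow> spec_norm (\<Sum>j\<in>S. (f j::real^'n^'m)) \<le> (\<Sum>j\<in>S. spec_norm (f j))"
proof (induction S rule: finite_induct)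
  case empty
  then show ?case by (simp add: spec_norm_zero)
next
  case (insert a S)
  then show ?case using spec_norm_add[of "f a" "sum f S"] by simp
qed

lemma spec_norm_transpose_le: "spec_norm (transpose (B::real^'n^'m)) \<le> spec_norm B"
proof (rule spec_norm_le)
  fix y
  let ?z = "transpose B *v y"
  have "(norm ?z)\<^sup>2 = y \<bullet> (B *v ?z)"
    by (simp add: power2_norm_eq_inner inner_matrix_transpose)
  also have "\<dots> \<le> norm y * norm (B *v ?z)" by (rule norm_cauchy_schwarz)
  also have "\<dots> \<le> norm y * (spec_norm B * norm ?z)" by (intro mult_left_mono spec_norm_bound) auto
  finally have "norm ?z * norm ?z \<le> (spec_norm B * norm y) * norm ?z"
    by (simp add: power2_eq_square ac_simps)
  then show "norm ?z \<le> spec_norm B * norm y"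
    using spec_norm_nonneg[of B] by (cases "norm ?z = 0") auto
qed

lemma quad_form_le_spec_norm: "quad_form M x \<le> spec_norm M * (norm x)\<^sup>2"
proof -
  have "quad_form M x \<le> norm x * norm (M *v x)" unfolding quad_form_def by (rule norm_cauchy_schwarz)
  also have "\<dots> \<le> norm x * (spec_norm M * norm x)" by (intro mult_left_mono spec_norm_bound) auto
  finally show ?thesis by (simp add: power2_eq_square ac_simps)
qed

lemma quad_form_le_spec_norm_bound:
  "spec_norm M \<le> b \<Longrightarrow> quad_form M x \<le> b * (norm x)\<^sup>2"
  by (meson quad_form_le_spec_norm mult_right_mono order_trans zero_le_power2)

lemma sigma_min_le_norm: "norm x = 1 \<Longrightarrow> sigma_min M \<le> norm (M *v x)"
  unfolding sigma_min_def by (rule cInf_lower) (auto intro!: bdd_belowI[of _ 0])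

lemma sigma_min_ge: "(\<And>x. norm x = 1 \<Longrightarrow> c \<le> norm ((M::real^'n^'m) *v x)) \<Longrightarrow> c \<le> sigma_min M"
  unfolding sigma_min_def
  by (rule cInf_greatest) (auto intro: exI[of _ "axis undefined 1"] simp: norm_axis_1)

lemma sigma_min_le_spec_norm: "sigma_min (M::real^'n^'m) \<le> spec_norm M"
proof -
  have "sigma_min M \<le> norm (M *v axis undefined 1)" by (rule sigma_min_le_norm) (simp add: norm_axis_1)
  also have "\<dots> \<le> spec_norm M * norm (axis (undefined::'n) (1::real))" by (rule spec_norm_bound)
  finally show ?thesis by (simp add: norm_axis_1)
qed

section \<open>Eigenvectors and rank-one decompositions of symmetric matrices\<close>

lemma nonneg_quadratic_linear_coeff_zero:
  fixes a b :: real
  assumes "\<And>t. 0 \<le> a * t + b * t\<^sup>2"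
  shows "a = 0"
proof (rule ccontr)
  assume "a \<noteq> 0"
  define c where "c = 2 * (\<bar>b\<bar> + 1)"
  define t where "t = - a / c"
  have c0: "0 < c" by (simp add: c_def)
  have "a * t + b * t\<^sup>2 \<le> a * t + \<bar>b\<bar> * t\<^sup>2" by (intro add_left_mono mult_right_mono) auto
  also have "\<dots> = (\<bar>b\<bar> / c - 1) * (a\<^sup>2 / c)"
    using c0 by (simp add: t_def power2_eq_square field_simps)
  also have "\<dots> < 0"
    using \<open>a \<noteq> 0\<close> c0 by (intro mult_neg_pos) (auto simp: c_def field_simps)
  finally show False using assms[of t] by simp
qed

lemma quad_form_attains_min_on_sphere:
  "\<exists>v. norm v = 1 \<and> (\<forall>x. quad_form S v * (norm x)\<^sup>2 \<le> quad_form S (x::real^'n))"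
proof -
  have cont: "continuous_on (sphere 0 1) (quad_form S)"
    unfolding quad_form_def by (intro continuous_intros linear_continuous_on) auto
  have ne: "sphere (0::real^'n) 1 \<noteq> {}"
    using norm_axis_1[where 'a='n] by (metis mem_sphere_0 empty_iff)
  obtain v where v: "v \<in> sphere 0 1" and vmin: "\<And>y. y \<in> sphere 0 1 \<Longrightarrow> quad_form S v \<le> quad_form S y"
    using continuous_attains_inf[OF compact_sphere ne cont] by blast
  have "quad_form S v * (norm x)\<^sup>2 \<le> quad_form S x" for x
  proof (cases "x = 0")
    case True then show ?thesis by (simp add: quad_form_def)
  next
    case False
    then have "quad_form S v \<le> quad_form S ((1 / norm x) *\<^sub>R x)" by (intro vmin) simp
    also have "\<dots> = quad_form S x / (norm x)\<^sup>2"
      by (simp add: quad_form_scaleR_vector power2_eq_square field_simps)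
    finally show ?thesis using False by (simp add: field_simps)
  qed
  with v show ?thesis by auto
qed

text \<open>Perturbing \<open>v\<close> along \<open>y = S v - m v\<close> changes the Rayleigh quotient to first order
  by a multiple of \<open>y \<bullet> y\<close>, which therefore vanishes.\<close>

lemma symmetric_rayleigh_minimizer_eigenvector:
  assumes sym: "transpose (S::real^'n^'n) = S" and v: "norm v = 1"
    and lb: "\<And>x. quad_form S v * (norm x)\<^sup>2 \<le> quad_form S x"
  shows "S *v v = quad_form S v *\<^sub>R v"
proof -
  have vv: "v \<bullet> v = 1" using v by (simp add: norm_eq_1)
  define m where "m = quad_form S v"
  define y where "y = S *v v - m *\<^sub>R v"
  have "0 \<le> (2 * (y \<bullet> (S *v v)) - 2 * m * (v \<bullet> y)) * t + (quad_form S y - m * (norm y)\<^sup>2) * t\<^sup>2"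
    for t
  proof -
    have "(norm (v + t *\<^sub>R y))\<^sup>2 = (v + t *\<^sub>R y) \<bullet> (v + t *\<^sub>R y)"
      by (simp only: power2_norm_eq_inner)
    also have "\<dots> = v \<bullet> v + 2 * t * (v \<bullet> y) + t\<^sup>2 * (y \<bullet> y)"
      by (simp add: inner_add_left inner_add_right inner_commute power2_eq_square algebra_simps)
    finally have "(norm (v + t *\<^sub>R y))\<^sup>2 = v \<bullet> v + 2 * t * (v \<bullet> y) + t\<^sup>2 * (y \<bullet> y)" .
    moreover have "quad_form S (v + t *\<^sub>R y) = m + 2 * t * (y \<bullet> (S *v v)) + t\<^sup>2 * quad_form S y"
      using quad_form_add_vector[OF sym, of v "t *\<^sub>R y"] by (simp add: quad_form_scaleR_vector m_def)
    ultimately show ?thesis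
      using lb[of "v + t *\<^sub>R y"] vv by (simp add: m_def power2_norm_eq_inner algebra_simps)
  qed
  then have "2 * (y \<bullet> (S *v v)) - 2 * m * (v \<bullet> y) = 0" by (rule nonneg_quadratic_linear_coeff_zero)
  then have "y \<bullet> y = 0"
    by (simp add: y_def inner_diff_left inner_diff_right inner_commute algebra_simps)
  then show ?thesis by (simp add: y_def m_def)
qed

lemma symmetric_min_eigenvector:
  assumes "transpose (S::real^'n^'n) = S"
  shows "\<exists>v m. norm v = 1 \<and> S *v v = m *\<^sub>R v \<and> (\<forall>x. m * (norm x)\<^sup>2 \<le> quad_form S x)"
  using quad_form_attains_min_on_sphere[of S] symmetric_rayleigh_minimizer_eigenvector[OF assms]
  by blast

lemma symmetric_max_eigenvector:
  assumes "transpose (S::real^'n^'n) = S"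
  shows "\<exists>v m. norm v = 1 \<and> S *v v = m *\<^sub>R v \<and> (\<forall>x. quad_form S x \<le> m * (norm x)\<^sup>2)"
proof -
  have "transpose (- S) = - S" using assms by (simp add: transpose_uminus)
  from symmetric_min_eigenvector[OF this] obtain v m where v: "norm v = 1" "(- S) *v v = m *\<^sub>R v"
    and lb: "\<And>x. m * (norm x)\<^sup>2 \<le> quad_form (- S) x" by blast
  have "S *v v = (- m) *\<^sub>R v"
    using v(2) by (simp add: matrix_vector_mult_uminus_left) (metis minus_minus)
  moreover have "quad_form S x \<le> (- m) * (norm x)\<^sup>2" for x
    using lb[of x] by (simp add: quad_form_def matrix_vector_mult_uminus_left)
  ultimately show ?thesis using v(1) by blast
qed

lemma psd_mat_pos_eigenvector:
  assumes "psd_mat (S::real^'n^'n)" "S \<noteq> 0"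
  shows "\<exists>v l. norm v = 1 \<and> 0 < l \<and> S *v v = l *\<^sub>R v"
proof -
  have sym: "transpose S = S" using assms(1) by (simp add: psd_mat_def)
  obtain v l where v: "norm v = 1" "S *v v = l *\<^sub>R v" and ub: "\<And>x. quad_form S x \<le> l * (norm x)\<^sup>2"
    using symmetric_max_eigenvector[OF sym] by blast
  have "0 < l"
  proof (rule ccontr)
    assume "\<not> 0 < l"
    then have "quad_form S x = 0" for x
      using ub[of x] psd_mat_quad_form_nonneg[OF assms(1), of x]
      by (smt (verit) mult_nonpos_nonneg zero_le_power2)
    then have "S = 0" by (rule symmetric_quad_form_zero_imp_zero[OF sym])
    with assms(2) show False by simp
  qed
  with v show ?thesis by blast
qed

lemma psd_mat_deflate:
  assumes S: "psd_mat (S::real^'n^'n)" and v: "norm v = 1" "S *v v = l *\<^sub>R v"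
  shows "psd_mat (S - l *\<^sub>R outer_prod v v)"
  unfolding psd_mat_iff_quad_form
proof (intro conjI allI)
  have sym: "transpose S = S" using S by (simp add: psd_mat_def)
  then show "transpose (S - l *\<^sub>R outer_prod v v) = S - l *\<^sub>R outer_prod v v"
    by (simp add: transpose_diff transpose_scalar transpose_outer_prod)
  have vv: "v \<bullet> v = 1" using v(1) by (simp add: norm_eq_1)
  fix x
  define w where "w = x - (v \<bullet> x) *\<^sub>R v"
  have wv: "w \<bullet> (S *v v) = 0"
    using v vv by (simp add: w_def inner_diff_left inner_diff_right inner_commute)
  have "quad_form S ((v \<bullet> x) *\<^sub>R v + w)
      = quad_form S ((v \<bullet> x) *\<^sub>R v) + 2 * (w \<bullet> (S *v ((v \<bullet> x) *\<^sub>R v))) + quad_form S w"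
    by (rule quad_form_add_vector[OF sym])
  also have "\<dots> = (v \<bullet> x)\<^sup>2 * l + quad_form S w"
    using wv v vv
    by (simp add: quad_form_scaleR_vector matrix_vector_mult_scaleR quad_form_def power2_eq_square)
  finally have "quad_form (S - l *\<^sub>R outer_prod v v) x = quad_form S w"
    by (simp add: w_def quad_form_diff quad_form_scaleR quad_form_outer_prod)
  then show "0 \<le> quad_form (S - l *\<^sub>R outer_prod v v) x"
    using psd_mat_quad_form_nonneg[OF S] by simp
qed

lemma dim_range_deflate_less:
  assumes sym: "transpose (S::real^'n^'n) = S" and v: "norm v = 1" "0 < l" "S *v v = l *\<^sub>R v"
  shows "dim (range ((*v) (S - l *\<^sub>R outer_prod v v))) < dim (range ((*v) S))"
proof -
  let ?S' = "S - l *\<^sub>R outer_prod v v"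
  have vv: "v \<bullet> v = 1" using v(1) by (simp add: norm_eq_1)
  have S'x: "?S' *v x = S *v (x - (v \<bullet> x) *\<^sub>R v)" for x
    using v(3) by (simp add: matrix_vector_mult_diff_rdistrib matrix_vector_mult_scaleR_left
        outer_prod_mult_vector matrix_vector_mult_diff_distrib matrix_vector_mult_scaleR inner_commute)
  have sub: "range ((*v) ?S') \<subseteq> range ((*v) S)" using S'x by auto
  have vin: "v \<in> range ((*v) S)"
  proof
    show "v = S *v ((1/l) *\<^sub>R v)" using v by (simp add: matrix_vector_mult_scaleR)
  qed simp
  have vnot: "v \<notin> range ((*v) ?S')"
  proof
    assume "v \<in> range ((*v) ?S')"
    then obtain x where x: "v = ?S' *v x" by auto
    have "v \<bullet> (?S' *v x) = (S *v v) \<bullet> (x - (v \<bullet> x) *\<^sub>R v)"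
      by (simp add: S'x symmetric_inner_swap[OF sym, of v]) (rule inner_commute)
    also have "\<dots> = 0" using v vv by (simp add: inner_diff_right inner_commute)
    finally show False using x v(1) by (metis inner_eq_zero_iff norm_zero zero_neq_one)
  qed
  have "subspace (range ((*v) M))" for M :: "real^'n^'n"
    by (rule linear_subspace_image[OF matrix_vector_mul_linear subspace_UNIV])
  then have "span (range ((*v) ?S')) \<subset> span (range ((*v) S))"
    using sub vin vnot by (simp add: span_eq_iff[THEN iffD2]) blast
  then show ?thesis by (rule dim_psubset)
qed

definition outer_sum :: "(real^'n) list \<Rightarrow> real^'n^'n" where
  "outer_sum vs = sum_list (map (\<lambda>v. outer_prod v v) vs)"

lemma outer_sum_Nil [simp]: "outer_sum [] = 0"
  by (simp add: outer_sum_def)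

lemma outer_sum_Cons [simp]: "outer_sum (v # vs) = outer_prod v v + outer_sum vs"
  by (simp add: outer_sum_def)

lemma psd_mat_outer_sum_decomposition: "psd_mat (S::real^'n^'n) \<Longrightarrow> \<exists>vs. S = outer_sum vs"
proof (induction "dim (range ((*v) S))" arbitrary: S rule: less_induct)
  case less
  show ?case
  proof (cases "S = 0")
    case True then show ?thesis by (intro exI[of _ "[]"]) simp
  next
    case False
    obtain v l where v: "norm v = 1" "0 < l" "S *v v = l *\<^sub>R v"
      using psd_mat_pos_eigenvector[OF less.prems False] by blast
    have sym: "transpose S = S" using less.prems by (simp add: psd_mat_def)
    obtain vs where "S - l *\<^sub>R outer_prod v v = outer_sum vs"
      using less.hyps[OF dim_range_deflate_less[OF sym v] psd_mat_deflate[OF less.prems v(1,3)]]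
      by blast
    then have "S = outer_sum (sqrt l *\<^sub>R v # vs)"
      using v(2) by (simp add: outer_prod_scaleR algebra_simps)
    then show ?thesis by blast
  qed
qed

lemma trace_mult_outer_sum: "trace (N ** outer_sum vs) = sum_list (map (quad_form N) vs)"
  by (induction vs) (simp_all add: matrix_add_ldistrib trace_add trace_mult_outer_prod_self trace_zero)

lemma trace_outer_sum: "trace (outer_sum vs) = sum_list (map (\<lambda>v. (norm v)\<^sup>2) vs)"
  by (induction vs) (simp_all add: trace_add trace_outer_prod trace_zero power2_norm_eq_inner)

lemma trace_mult_psd_le:
  assumes "psd_mat S" "\<And>x. quad_form N x \<le> c * (norm x)\<^sup>2"
  shows "trace (N ** S) \<le> c * trace S"
proof -
  obtain vs where S: "S = outer_sum vs" using psd_mat_outer_sum_decomposition[OF assms(1)] by blast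
  have "sum_list (map (quad_form N) vs) \<le> c * sum_list (map (\<lambda>v. (norm v)\<^sup>2) vs)"
    using assms(2) by (induction vs) (auto simp: algebra_simps intro: add_mono)
  then show ?thesis by (simp add: S trace_mult_outer_sum trace_outer_sum)
qed

lemma trace_mult_psd_ge:
  assumes "psd_mat S" "\<And>x. c * (norm x)\<^sup>2 \<le> quad_form N x"
  shows "c * trace S \<le> trace (N ** S)"
proof -
  obtain vs where S: "S = outer_sum vs" using psd_mat_outer_sum_decomposition[OF assms(1)] by blast
  have "c * sum_list (map (\<lambda>v. (norm v)\<^sup>2) vs) \<le> sum_list (map (quad_form N) vs)"
    using assms(2) by (induction vs) (auto simp: algebra_simps intro: add_mono)
  then show ?thesis by (simp add: S trace_mult_outer_sum trace_outer_sum)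
qed

lemma trace_mult_psd_mono:
  assumes "psd_mat S" "\<And>x. quad_form Z x \<le> quad_form N x"
  shows "trace (Z ** S) \<le> trace (N ** S)"
proof -
  have "0 * trace S \<le> trace ((N - Z) ** S)"
    by (rule trace_mult_psd_ge[OF assms(1)]) (use assms(2) in \<open>simp add: quad_form_diff\<close>)
  then show ?thesis by (simp add: matrix_diff_rdistrib trace_sub)
qed

lemma trace_mult_psd_nonneg: "psd_mat N \<Longrightarrow> psd_mat S \<Longrightarrow> 0 \<le> trace (N ** S)"
  using trace_mult_psd_ge[of S 0 N] by (simp add: psd_mat_quad_form_nonneg)

lemma psd_mat_trace_nonneg: "psd_mat S \<Longrightarrow> 0 \<le> trace S"
  using trace_mult_psd_nonneg[OF psd_mat_1, of S] by simp

lemma psd_mat_spec_norm_le_trace: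
  assumes "psd_mat (S::real^'n^'n)"
  shows "spec_norm S \<le> trace S"
proof -
  obtain vs where S: "S = outer_sum vs" using psd_mat_outer_sum_decomposition[OF assms] by blast
  have "norm (outer_sum vs *v x) \<le> trace (outer_sum vs) * norm x" for x
  proof (induction vs)
    case Nil then show ?case by (simp add: trace_zero)
  next
    case (Cons v vs)
    have "norm (outer_prod v v *v x) = \<bar>v \<bullet> x\<bar> * norm v" by (simp add: outer_prod_mult_vector)
    also have "\<dots> \<le> (norm v * norm x) * norm v" by (intro mult_right_mono Cauchy_Schwarz_ineq2) auto
    finally have "norm (outer_prod v v *v x) \<le> (norm v)\<^sup>2 * norm x" by (simp add: power2_eq_square ac_simps)
    with Cons show ?case
      by (simp add: matrix_vector_mult_add_rdistrib trace_add trace_outer_prod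
          power2_norm_eq_inner[symmetric] distrib_right norm_triangle_le add_mono)
  qed
  then show ?thesis unfolding S by (rule spec_norm_le)
qed

lemma psd_mat_entry_le_trace:
  assumes "psd_mat (S::real^'n^'n)"
  shows "\<bar>S $ a $ b\<bar> \<le> trace S"
proof -
  have "\<bar>S $ a $ b\<bar> \<le> norm (axis a (1::real)) * norm (S *v axis b 1)"
    unfolding inner_axis_matrix[symmetric] by (rule Cauchy_Schwarz_ineq2)
  also have "\<dots> \<le> spec_norm S" using spec_norm_bound[of S "axis b 1"] by (simp add: norm_axis_1)
  also have "\<dots> \<le> trace S" by (rule psd_mat_spec_norm_le_trace[OF assms])
  finally show ?thesis .
qed

lemma norm_le_entry_sum: "norm (W::real^'n^'m) \<le> (\<Sum>a\<in>UNIV. \<Sum>b\<in>UNIV. \<bar>W $ a $ b\<bar>)"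
proof -
  have "norm W \<le> (\<Sum>a\<in>UNIV. norm (W $ a))"
    unfolding norm_vec_def by (rule L2_set_le_sum) simp
  also have "\<dots> \<le> (\<Sum>a\<in>UNIV. \<Sum>b\<in>UNIV. \<bar>W $ a $ b\<bar>)"
    by (intro sum_mono norm_le_l1_cart)
  finally show ?thesis .
qed

lemma psd_mat_norm_le_trace:
  assumes "psd_mat (S::real^'n^'n)"
  shows "norm S \<le> real CARD('n) ^ 2 * trace S"
proof -
  have "norm S \<le> (\<Sum>a\<in>UNIV. \<Sum>b\<in>UNIV. \<bar>S $ a $ b\<bar>)" by (rule norm_le_entry_sum)
  also have "\<dots> \<le> (\<Sum>a\<in>(UNIV::'n set). \<Sum>b\<in>(UNIV::'n set). trace S)"
    by (rule sum_mono, rule sum_mono, rule psd_mat_entry_le_trace[OF assms])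
  also have "\<dots> = real CARD('n) ^ 2 * trace S" by (simp add: power2_eq_square)
  finally show ?thesis .
qed

lemma psd_mat_sigma_min_quad_form:
  assumes "psd_mat (S::real^'n^'n)"
  shows "sigma_min S * (norm x)\<^sup>2 \<le> quad_form S x"
proof -
  have sym: "transpose S = S" using assms by (simp add: psd_mat_def)
  obtain v m where v: "norm v = 1" "S *v v = m *\<^sub>R v"
    and lb: "\<And>x. m * (norm x)\<^sup>2 \<le> quad_form S x"
    using symmetric_min_eigenvector[OF sym] by blast
  have "m = quad_form S v" using v by (simp add: quad_form_def power2_norm_eq_inner[symmetric])
  then have m0: "0 \<le> m" using psd_mat_quad_form_nonneg[OF assms] by simp
  have "sigma_min S \<le> norm (S *v v)" by (rule sigma_min_le_norm[OF v(1)])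
  also have "\<dots> = m" using v m0 by simp
  finally show ?thesis using lb[of x] by (meson mult_right_mono order_trans zero_le_power2)
qed

lemma pd_mat_sigma_min_pos:
  assumes "pd_mat (S::real^'n^'n)"
  shows "0 < sigma_min S"
proof -
  have sym: "transpose S = S" using assms by (simp add: pd_mat_def)
  obtain v m where v: "norm v = 1" "S *v v = m *\<^sub>R v"
    and lb: "\<And>x. m * (norm x)\<^sup>2 \<le> quad_form S x"
    using symmetric_min_eigenvector[OF sym] by blast
  have "m = quad_form S v" using v by (simp add: quad_form_def power2_norm_eq_inner[symmetric])
  moreover have "v \<noteq> 0" using v(1) by auto
  ultimately have m0: "0 < m" using assms unfolding pd_mat_def quad_form_def by auto
  have "m \<le> sigma_min S"
  proof (rule sigma_min_ge)
    fix x :: "real^'n" assume x: "norm x = 1"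
    have "m = m * (norm x)\<^sup>2" using x by simp
    also have "\<dots> \<le> quad_form S x" by (rule lb)
    also have "\<dots> \<le> norm x * norm (S *v x)" unfolding quad_form_def by (rule norm_cauchy_schwarz)
    finally show "m \<le> norm (S *v x)" using x by simp
  qed
  with m0 show ?thesis by simp
qed

section \<open>The coupled Lyapunov operators\<close>

definition Top_adj :: "('s::finite \<Rightarrow> real^'d^'d) \<Rightarrow> ('s \<Rightarrow> real^'k^'d) \<Rightarrow> ('s \<Rightarrow> 's \<Rightarrow> real)
    \<Rightarrow> ('s \<Rightarrow> real^'d^'k) \<Rightarrow> ('s \<Rightarrow> real^'d^'d) \<Rightarrow> 's \<Rightarrow> real^'d^'d" where
  "Top_adj A B p K P i = transpose (Gam A B K i) ** Eop p P i ** Gam A B K i"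

definition trace_pairing :: "('s::finite \<Rightarrow> real^'d^'d) \<Rightarrow> ('s \<Rightarrow> real^'d^'d) \<Rightarrow> real" where
  "trace_pairing P V = (\<Sum>i\<in>UNIV. trace (P i ** V i))"

definition psd_tuple :: "('s \<Rightarrow> real^'d^'d) \<Rightarrow> bool" where
  "psd_tuple V \<longleftrightarrow> (\<forall>i. psd_mat (V i))"

definition stage_cost :: "('s \<Rightarrow> real^'d^'d) \<Rightarrow> ('s \<Rightarrow> real^'k^'k) \<Rightarrow> ('s \<Rightarrow> real^'d^'k)
    \<Rightarrow> 's \<Rightarrow> real^'d^'d" where
  "stage_cost Q R K i = Q i + transpose (K i) ** R i ** K i"

lemma trace_pairing_Top: "trace_pairing P (Top A B p K V) = trace_pairing (Top_adj A B p K P) V"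
proof -
  let ?G = "Gam A B K"
  have "trace_pairing P (Top A B p K V)
      = (\<Sum>j\<in>UNIV. \<Sum>i\<in>UNIV. p i j * trace (P j ** (?G i ** V i ** transpose (?G i))))"
    by (simp add: trace_pairing_def Top_def matrix_sum_right matrix_scaleR_right trace_sum trace_scaleR)
  also have "\<dots> = (\<Sum>i\<in>UNIV. \<Sum>j\<in>UNIV. p i j * trace ((transpose (?G i) ** P j ** ?G i) ** V i))"
    by (subst sum.swap) (simp add: trace_congruence_swap)
  also have "\<dots> = trace_pairing (Top_adj A B p K P) V"
    by (simp add: trace_pairing_def Top_adj_def Eop_def matrix_sum_right matrix_sum_left
        matrix_scaleR_right matrix_scaleR_left trace_sum trace_scaleR)
  finally show ?thesis .
qed

lemma trace_pairing_Top_power: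
  "trace_pairing P ((Top A B p K ^^ n) V) = trace_pairing ((Top_adj A B p K ^^ n) P) V"
proof (induction n arbitrary: P)
  case 0 then show ?case by simp
next
  case (Suc n)
  have "trace_pairing P ((Top A B p K ^^ Suc n) V)
      = trace_pairing (Top_adj A B p K P) ((Top A B p K ^^ n) V)"
    by (simp add: trace_pairing_Top)
  also have "\<dots> = trace_pairing ((Top_adj A B p K ^^ Suc n) P) V"
    by (simp add: Suc funpow_Suc_right del: funpow.simps)
  finally show ?case .
qed

lemma trace_pairing_add_left:
  "trace_pairing (\<lambda>i. P i + P' i) X = trace_pairing P X + trace_pairing P' X"
  by (simp add: trace_pairing_def matrix_add_rdistrib trace_add sum.distrib)

lemma trace_pairing_diff_left:
  "trace_pairing (\<lambda>i. P i - P' i) X = trace_pairing P X - trace_pairing P' X"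
  by (simp add: trace_pairing_def matrix_diff_rdistrib trace_sub sum_subtractf)

lemma trace_pairing_diff_right:
  "trace_pairing P (\<lambda>i. X i - X' i) = trace_pairing P X - trace_pairing P X'"
  by (simp add: trace_pairing_def matrix_diff_ldistrib trace_sub sum_subtractf)

lemma trace_pairing_psd_nonneg: "psd_tuple V \<Longrightarrow> psd_tuple W \<Longrightarrow> 0 \<le> trace_pairing V W"
  unfolding trace_pairing_def psd_tuple_def by (auto intro!: sum_nonneg trace_mult_psd_nonneg)

lemma quad_form_Top:
  "quad_form (Top A B p K V j) x = (\<Sum>i\<in>UNIV. p i j * quad_form (V i) (transpose (Gam A B K i) *v x))"
  by (simp add: Top_def quad_form_sum quad_form_scaleR quad_form_congruence_transpose)

lemma quad_form_Top_adj:
  "quad_form (Top_adj A B p K P i) x = (\<Sum>j\<in>UNIV. p i j * quad_form (P j) (Gam A B K i *v x))"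
  by (simp add: Top_adj_def Eop_def quad_form_congruence quad_form_sum quad_form_scaleR)

lemma Top_scaleR: "Top A B p K (\<lambda>i. c *\<^sub>R V i) = (\<lambda>j. c *\<^sub>R Top A B p K V j)"
  by (simp add: fun_eq_iff Top_def matrix_scaleR_left matrix_scaleR_right scaleR_sum_right mult.commute)

lemma Top_power_scaleR: "(Top A B p K ^^ n) (\<lambda>i. c *\<^sub>R V i) = (\<lambda>j. c *\<^sub>R (Top A B p K ^^ n) V j)"
  by (induction n) (simp_all add: Top_scaleR)

lemma Eop_scaleR: "Eop p (\<lambda>i. c *\<^sub>R V i) j = c *\<^sub>R Eop p V j"
  by (simp add: Eop_def scaleR_sum_right mult.commute)

lemma Top_adj_scaleR: "Top_adj A B p K (\<lambda>i. c *\<^sub>R V i) = (\<lambda>j. c *\<^sub>R Top_adj A B p K V j)"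
  by (simp add: fun_eq_iff Top_adj_def Eop_scaleR matrix_scaleR_left matrix_scaleR_right)

lemma Top_adj_power_scaleR:
  "(Top_adj A B p K ^^ n) (\<lambda>i. c *\<^sub>R V i) = (\<lambda>j. c *\<^sub>R (Top_adj A B p K ^^ n) V j)"
  by (induction n) (simp_all add: Top_adj_scaleR)

lemma Top_adj_diff:
  "Top_adj A B p K (\<lambda>i. V i - W i) = (\<lambda>j. Top_adj A B p K V j - Top_adj A B p K W j)"
  by (simp add: fun_eq_iff Top_adj_def Eop_def matrix_diff_ldistrib matrix_diff_rdistrib
      scaleR_diff_right sum_subtractf)

context
  fixes p :: "'s::finite \<Rightarrow> 's \<Rightarrow> real"
  assumes p_nonneg: "\<And>i j. 0 \<le> p i j"
begin

lemma psd_tuple_Top: "psd_tuple V \<Longrightarrow> psd_tuple (Top A B p K V)"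
  unfolding psd_tuple_def
  by (auto simp: Top_def intro!: psd_mat_sum psd_mat_scaleR psd_mat_congruence_transpose p_nonneg)

lemma psd_tuple_Top_power: "psd_tuple V \<Longrightarrow> psd_tuple ((Top A B p K ^^ n) V)"
  by (induction n) (simp_all add: psd_tuple_Top)

lemma psd_mat_Eop: "psd_tuple P \<Longrightarrow> psd_mat (Eop p P i)"
  unfolding psd_tuple_def Eop_def by (auto intro!: psd_mat_sum psd_mat_scaleR p_nonneg)

lemma psd_tuple_Top_adj: "psd_tuple V \<Longrightarrow> psd_tuple (Top_adj A B p K V)"
  unfolding psd_tuple_def Top_adj_def
  by (auto intro!: psd_mat_congruence psd_mat_Eop[unfolded psd_tuple_def])

lemma psd_tuple_Top_adj_power: "psd_tuple V \<Longrightarrow> psd_tuple ((Top_adj A B p K ^^ n) V)"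
  by (induction n) (simp_all add: psd_tuple_Top_adj)

lemma Top_quad_form_mono:
  assumes "\<And>i x. quad_form (V i) x \<le> quad_form (W i) x"
  shows "quad_form (Top A B p K V j) x \<le> quad_form (Top A B p K W j) x"
  unfolding quad_form_Top by (intro sum_mono mult_left_mono assms p_nonneg)

lemma Top_power_quad_form_mono:
  assumes "\<And>i x. quad_form (V i) x \<le> quad_form (W i) x"
  shows "quad_form ((Top A B p K ^^ n) V j) x \<le> quad_form ((Top A B p K ^^ n) W j) x"
  using assms by (induction n arbitrary: j x) (simp_all add: Top_quad_form_mono)

lemma Top_adj_quad_form_mono:
  assumes "\<And>i x. quad_form (V i) x \<le> quad_form (W i) x"
  shows "quad_form (Top_adj A B p K V j) x \<le> quad_form (Top_adj A B p K W j) x"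
  unfolding quad_form_Top_adj by (intro sum_mono mult_left_mono assms p_nonneg)

lemma Top_adj_power_quad_form_mono:
  assumes "\<And>i x. quad_form (V i) x \<le> quad_form (W i) x"
  shows "quad_form ((Top_adj A B p K ^^ n) V j) x \<le> quad_form ((Top_adj A B p K ^^ n) W j) x"
  using assms by (induction n arbitrary: j x) (simp_all add: Top_adj_quad_form_mono)

lemma Top_power_quad_form_le_scaled:
  assumes "\<And>i x. quad_form (V i) x \<le> c * (norm x)\<^sup>2"
  shows "quad_form ((Top A B p K ^^ n) V j) x \<le> c * quad_form ((Top A B p K ^^ n) (\<lambda>i. mat 1) j) x"
proof -
  have "quad_form ((Top A B p K ^^ n) V j) x
      \<le> quad_form ((Top A B p K ^^ n) (\<lambda>i. c *\<^sub>R mat 1) j) x"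
    by (rule Top_power_quad_form_mono) (simp add: quad_form_scaleR quad_form_mat assms)
  then show ?thesis by (simp add: Top_power_scaleR quad_form_scaleR)
qed

end

section \<open>Geometric decay under mean-square stability\<close>

lemma ms_stable_Top_power_half:
  fixes A :: "'s::finite \<Rightarrow> real^'d::finite^'d"
  assumes "ms_stable A B p K"
  shows "\<exists>N>0. \<forall>j x. quad_form ((Top A B p K ^^ N) (\<lambda>i. mat 1) j) x \<le> 1/2 * (norm x)\<^sup>2"
proof -
  let ?TI = "\<lambda>t. (Top A B p K ^^ t) (\<lambda>i. mat 1 :: real^'d^'d)"
  let ?e = "\<lambda>t j. \<Sum>a\<in>UNIV. \<Sum>b\<in>UNIV. \<bar>?TI t j $ a $ b\<bar>"
  have "(\<lambda>t. ?TI t j) \<longlonglongrightarrow> 0" for j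
    using assms psd_mat_1 unfolding ms_stable_def by fast
  then have "(\<lambda>t. ?e t j) \<longlonglongrightarrow> (\<Sum>a\<in>UNIV. \<Sum>b\<in>UNIV. \<bar>(0::real^'d^'d) $ a $ b\<bar>)" for j
    by (intro tendsto_intros)
  then have "\<forall>\<^sub>F t in sequentially. ?e t j < 1/2" for j
    by (intro order_tendstoD) auto
  then have "\<forall>\<^sub>F t in sequentially. \<forall>j. ?e t j < 1/2"
    by (rule eventually_all_finite)
  then obtain N0 where N0: "\<And>t j. t \<ge> N0 \<Longrightarrow> ?e t j < 1/2"
    unfolding eventually_sequentially by blast
  have "quad_form (?TI (Suc N0) j) x \<le> 1/2 * (norm x)\<^sup>2" for j x
  proof -
    have "quad_form (?TI (Suc N0) j) x \<le> ?e (Suc N0) j * (norm x)\<^sup>2"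
      by (rule quad_form_le_entry_sum)
    also have "\<dots> \<le> 1/2 * (norm x)\<^sup>2"
      using N0[of "Suc N0" j] by (intro mult_right_mono) auto
    finally show ?thesis .
  qed
  then show ?thesis by blast
qed

lemma Top_power_quad_form_exp_bound:
  assumes "\<And>i j. 0 \<le> p i j"
  shows "\<exists>a\<ge>1. \<forall>t j x. quad_form ((Top A B p K ^^ t) (\<lambda>i. mat 1) j) x \<le> a ^ t * (norm x)\<^sup>2"
proof -
  let ?T = "Top A B p K"
  define a where "a = max 1 (\<Sum>j\<in>UNIV. spec_norm (?T (\<lambda>i. mat 1) j))"
  have "spec_norm (?T (\<lambda>i. mat 1) j) \<le> a" for j
    unfolding a_def by (rule max.coboundedI2, rule member_le_sum) (auto simp: spec_norm_nonneg)
  then have step: "quad_form (?T (\<lambda>i. mat 1) j) x \<le> a * (norm x)\<^sup>2" for j x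
    by (rule quad_form_le_spec_norm_bound)
  have "quad_form ((?T ^^ t) (\<lambda>i. mat 1) j) x \<le> a ^ t * (norm x)\<^sup>2" for t j x
  proof (induction t arbitrary: j x)
    case 0 then show ?case by (simp add: quad_form_mat)
  next
    case (Suc t)
    have "quad_form ((?T ^^ Suc t) (\<lambda>i. mat 1) j) x = quad_form ((?T ^^ t) (?T (\<lambda>i. mat 1)) j) x"
      by (simp add: funpow_Suc_right del: funpow.simps)
    also have "\<dots> \<le> a * quad_form ((?T ^^ t) (\<lambda>i. mat 1) j) x"
      by (rule Top_power_quad_form_le_scaled[OF assms step])
    also have "\<dots> \<le> a * (a ^ t * (norm x)\<^sup>2)"
      using Suc by (intro mult_left_mono) (auto simp: a_def)
    finally show ?case by (simp add: mult.assoc)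
  qed
  then show ?thesis by (intro exI[of _ a]) (auto simp: a_def)
qed

text \<open>Halving after \<open>N\<close> steps and growing at most like \<open>a\<^sup>t\<close> in between gives decay at rate
  \<open>\<rho> = (1/2)\<^bsup>1/N\<^esup>\<close> with constant \<open>2 a\<^sup>N\<close>.\<close>

lemma ms_stable_geometric_decay:
  fixes A :: "'s::finite \<Rightarrow> real^'d::finite^'d"
  assumes p_nonneg: "\<And>i j. 0 \<le> p i j" and st: "ms_stable A B p K"
  shows "\<exists>c \<rho>. 0 \<le> c \<and> 0 \<le> \<rho> \<and> \<rho> < 1 \<and>
     (\<forall>t j x. quad_form ((Top A B p K ^^ t) (\<lambda>i. mat 1) j) x \<le> c * \<rho> ^ t * (norm x)\<^sup>2)"
proof -
  let ?TI = "\<lambda>t. (Top A B p K ^^ t) (\<lambda>i. mat 1 :: real^'d^'d)"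
  obtain N where N: "0 < N" and half: "\<And>j x. quad_form (?TI N j) x \<le> 1/2 * (norm x)\<^sup>2"
    using ms_stable_Top_power_half[OF st] by blast
  obtain a where a1: "1 \<le> a" and grow: "\<And>t j x. quad_form (?TI t j) x \<le> a ^ t * (norm x)\<^sup>2"
    using Top_power_quad_form_exp_bound[where p=p, OF p_nonneg] by blast
  define \<rho> where "\<rho> = root N (1/2)"
  define c where "c = 2 * a ^ N"
  have \<rho>0: "0 < \<rho>" using N by (simp add: \<rho>_def)
  have \<rho>1: "\<rho> < 1" using N by (simp add: \<rho>_def)
  have \<rho>N: "\<rho> ^ N = 1/2" using N by (simp add: \<rho>_def)
  have "quad_form (?TI t j) x \<le> c * \<rho> ^ t * (norm x)\<^sup>2" for t j x
  proof (induction t arbitrary: j x rule: less_induct)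
    case (less t)
    show ?case
    proof (cases "t < N")
      case True
      have "a ^ t \<le> a ^ N" using True a1 by (intro power_increasing) auto
      also have "\<dots> = c * \<rho> ^ N" by (simp add: c_def \<rho>N)
      also have "\<dots> \<le> c * \<rho> ^ t"
        using True \<rho>0 \<rho>1 a1 by (intro mult_left_mono power_decreasing) (auto simp: c_def)
      finally show ?thesis using grow[of t j x] by (meson mult_right_mono order_trans zero_le_power2)
    next
      case False
      then obtain s where t: "t = s + N" by (metis add.commute le_add_diff_inverse not_less)
      have "quad_form (?TI t j) x = quad_form ((Top A B p K ^^ s) (?TI N) j) x"
        by (simp add: t funpow_add)
      also have "\<dots> \<le> 1/2 * quad_form (?TI s j) x"
        by (rule Top_power_quad_form_le_scaled[OF p_nonneg half])
      also have "\<dots> \<le> 1/2 * (c * \<rho> ^ s * (norm x)\<^sup>2)"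
        using less[of s] N t by (intro mult_left_mono) auto
      also have "\<dots> = c * \<rho> ^ t * (norm x)\<^sup>2" by (simp add: t power_add \<rho>N)
      finally show ?thesis .
    qed
  qed
  moreover have "0 \<le> c" using a1 by (simp add: c_def)
  ultimately show ?thesis using \<rho>0 \<rho>1 by (intro exI[of _ c] exI[of _ \<rho>]) auto
qed

section \<open>Series of the Lyapunov operators\<close>

lemma summable_matrix_geometric:
  fixes f :: "nat \<Rightarrow> real^'n^'m"
  assumes "\<And>t a b. \<bar>f t $ a $ b\<bar> \<le> C * \<rho> ^ t" "0 \<le> \<rho>" "\<rho> < 1"
  shows "summable f"
proof (rule summable_comparison_test)
  have "norm (f n) \<le> (real CARD('m) * real CARD('n) * C) * \<rho> ^ n" for n
  proof -
    have "norm (f n) \<le> (\<Sum>a\<in>UNIV. \<Sum>b\<in>UNIV. \<bar>f n $ a $ b\<bar>)" by (rule norm_le_entry_sum)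
    also have "\<dots> \<le> (\<Sum>a\<in>(UNIV::'m set). \<Sum>b\<in>(UNIV::'n set). C * \<rho> ^ n)"
      by (intro sum_mono assms(1))
    finally show ?thesis by simp
  qed
  then show "\<exists>N. \<forall>n\<ge>N. norm (f n) \<le> (real CARD('m) * real CARD('n) * C) * \<rho> ^ n" by auto
  show "summable (\<lambda>n. (real CARD('m) * real CARD('n) * C) * \<rho> ^ n)"
    using assms(2,3) by (intro summable_mult summable_geometric) simp
qed

lemma bounded_linear_congruence: "bounded_linear (\<lambda>X. (G1::real^'n^'m) ** (X::real^'n^'n) ** (G2::real^'p^'n))"
  by (rule bounded_linearI')
    (simp_all add: matrix_add_ldistrib matrix_add_rdistrib matrix_scaleR_left matrix_scaleR_right)

lemma bounded_linear_trace_mult_left: "bounded_linear (\<lambda>X. trace ((X::real^'n^'n) ** Y))"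
  by (rule bounded_linearI') (simp_all add: matrix_add_rdistrib matrix_scaleR_left trace_add trace_scaleR)

lemma bounded_linear_trace_mult_right: "bounded_linear (\<lambda>X. trace (Y ** (X::real^'n^'n)))"
  by (rule bounded_linearI') (simp_all add: matrix_add_ldistrib matrix_scaleR_right trace_add trace_scaleR)

lemma bounded_linear_quad_form: "bounded_linear (\<lambda>X. quad_form (X::real^'n^'n) x)"
  by (rule bounded_linearI') (simp_all add: quad_form_add quad_form_scaleR)

lemma bounded_linear_transpose: "bounded_linear (\<lambda>X. transpose (X::real^'n^'m))"
  by (rule bounded_linearI') (simp_all add: transpose_add transpose_scalar)

lemma psd_mat_suminf:
  assumes "summable f" "\<And>t. psd_mat (f t)"
  shows "psd_mat (suminf f)"
  unfolding psd_mat_iff_quad_form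
proof (intro conjI allI)
  have "transpose (suminf f) = (\<Sum>t. transpose (f t))"
    by (rule bounded_linear.suminf[OF bounded_linear_transpose assms(1)])
  then show "transpose (suminf f) = suminf f" using assms(2) by (simp add: psd_mat_def)
  fix x
  have "quad_form (suminf f) x = (\<Sum>t. quad_form (f t) x)"
    by (rule bounded_linear.suminf[OF bounded_linear_quad_form assms(1)])
  also have "0 \<le> \<dots>"
    by (intro suminf_nonneg bounded_linear.summable[OF bounded_linear_quad_form assms(1)]
        psd_mat_quad_form_nonneg assms(2))
  finally show "0 \<le> quad_form (suminf f) x" .
qed

lemma abs_trace_pairing_le:
  assumes "\<And>i a b. \<bar>W i $ a $ b\<bar> \<le> e"
  shows "\<bar>trace_pairing M W\<bar> \<le> (\<Sum>i\<in>UNIV. \<Sum>a\<in>UNIV. \<Sum>b\<in>UNIV. \<bar>M i $ a $ b\<bar>) * e"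
proof -
  have "\<bar>trace_pairing M W\<bar> \<le> (\<Sum>i\<in>UNIV. \<Sum>a\<in>UNIV. \<Sum>b\<in>UNIV. \<bar>M i $ a $ b * W i $ b $ a\<bar>)"
    unfolding trace_pairing_def trace_matrix_mult_eq_sum
    by (rule order_trans[OF sum_abs]) (intro sum_mono order_trans[OF sum_abs] sum_abs)
  also have "\<dots> \<le> (\<Sum>i\<in>UNIV. \<Sum>a\<in>UNIV. \<Sum>b\<in>UNIV. \<bar>M i $ a $ b\<bar> * e)"
    by (intro sum_mono) (auto simp: abs_mult intro: mult_left_mono assms)
  finally show ?thesis by (simp add: sum_distrib_right)
qed

definition unit_tuple :: "'s \<Rightarrow> 'n \<Rightarrow> 'n \<Rightarrow> 's \<Rightarrow> real^'n^'n" where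
  "unit_tuple i a b = (\<lambda>j. if j = i then outer_prod (axis a 1) (axis b 1) else 0)"

lemma trace_pairing_unit_tuple: "trace_pairing P (unit_tuple i a b) = P i $ b $ a"
proof -
  have "trace_pairing P (unit_tuple i a b) = trace (P i ** outer_prod (axis a 1) (axis b 1))"
    unfolding trace_pairing_def unit_tuple_def
    by (simp add: if_distrib trace_zero cong: if_cong)
  also have "\<dots> = P i $ b $ a" by (simp add: trace_mult_outer_prod inner_axis_matrix)
  finally show ?thesis .
qed

lemma spec_norm_unit_tuple_sum:
  "(\<Sum>j\<in>UNIV. spec_norm (unit_tuple (i::'s::finite) a b j :: real^'n^'n)) \<le> 1"
proof -
  have "spec_norm (outer_prod (axis a 1) (axis b 1) :: real^'n^'n) \<le> 1"
  proof (rule spec_norm_le)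
    fix x :: "real^'n"
    have "norm (outer_prod (axis a 1) (axis b 1) *v x) = \<bar>axis b 1 \<bullet> x\<bar>"
      by (simp add: outer_prod_mult_vector norm_axis_1)
    also have "\<dots> \<le> norm (axis b (1::real)) * norm x" by (rule Cauchy_Schwarz_ineq2)
    finally show "norm (outer_prod (axis a 1) (axis b 1) *v x) \<le> 1 * norm x" by (simp add: norm_axis_1)
  qed
  then show ?thesis
    by (simp add: unit_tuple_def if_distrib spec_norm_zero cong: if_cong)
qed

text \<open>Preserved by \<open>Top\<close>, this domination bounds the entries of \<open>Top\<^sup>t V\<close> for arbitrary,
  possibly non-symmetric \<open>V\<close> by quadratic forms of \<open>Top\<^sup>t I\<close>.\<close>

definition form_dominated :: "('s \<Rightarrow> real^'n^'n) \<Rightarrow> ('s \<Rightarrow> real^'n^'n) \<Rightarrow> bool" where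
  "form_dominated V S \<longleftrightarrow> (\<forall>j u v. \<bar>2 * (u \<bullet> (V j *v v))\<bar> \<le> quad_form (S j) u + quad_form (S j) v)"

lemma inner_congruence_transpose:
  fixes G :: "real^'n^'m" and W :: "real^'n^'n"
  shows "u \<bullet> ((G ** W ** transpose G) *v v) = (transpose G *v u) \<bullet> (W *v (transpose G *v v))"
proof -
  have "(G ** W ** transpose G) *v v = G *v (W *v (transpose G *v v))"
    by (simp only: matrix_vector_mul_assoc matrix_mul_assoc)
  then show ?thesis by (simp add: inner_matrix_transpose[of u G])
qed

lemma inner_Top:
  "u \<bullet> (Top A B p K V j *v v) =
   (\<Sum>i\<in>UNIV. p i j * ((transpose (Gam A B K i) *v u) \<bullet> (V i *v (transpose (Gam A B K i) *v v))))"
  by (simp add: Top_def matrix_vector_mult_sum_left matrix_vector_mult_scaleR_left inner_sum_right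
      inner_congruence_transpose)

lemma form_dominated_Top:
  assumes p_nonneg: "\<And>i j. 0 \<le> p i j" and "form_dominated V S"
  shows "form_dominated (Top A B p K V) (Top A B p K S)"
  unfolding form_dominated_def
proof (intro allI)
  fix j u v
  let ?G = "\<lambda>i. transpose (Gam A B K i)"
  have "\<bar>2 * (u \<bullet> (Top A B p K V j *v v))\<bar>
      = \<bar>\<Sum>i\<in>UNIV. p i j * (2 * ((?G i *v u) \<bullet> (V i *v (?G i *v v))))\<bar>"
    by (simp add: inner_Top sum_distrib_left mult_ac)
  also have "\<dots> \<le> (\<Sum>i\<in>UNIV. \<bar>p i j * (2 * ((?G i *v u) \<bullet> (V i *v (?G i *v v))))\<bar>)"
    by (rule sum_abs)
  also have "\<dots> \<le> (\<Sum>i\<in>UNIV. p i j * (quad_form (S i) (?G i *v u) + quad_form (S i) (?G i *v v)))"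
    using assms by (intro sum_mono) (simp add: form_dominated_def abs_mult mult_left_mono)
  also have "\<dots> = quad_form (Top A B p K S j) u + quad_form (Top A B p K S j) v"
    by (simp add: quad_form_Top sum.distrib algebra_simps)
  finally show "\<bar>2 * (u \<bullet> (Top A B p K V j *v v))\<bar>
      \<le> quad_form (Top A B p K S j) u + quad_form (Top A B p K S j) v" .
qed

lemma form_dominated_spec_norm:
  assumes "\<And>j. spec_norm (V j) \<le> s"
  shows "form_dominated V (\<lambda>i. s *\<^sub>R mat 1)"
  unfolding form_dominated_def
proof (intro allI)
  fix j u v
  have s0: "0 \<le> s" using assms[of j] spec_norm_nonneg[of "V j"] by simp
  have "norm (V j *v v) \<le> s * norm v"
    using spec_norm_bound[of "V j" v] assms[of j] by (meson mult_right_mono norm_ge_zero order_trans)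
  then have "\<bar>2 * (u \<bullet> (V j *v v))\<bar> \<le> 2 * (norm u * (s * norm v))"
    using Cauchy_Schwarz_ineq2[of u "V j *v v"] by (simp add: abs_mult order_trans mult_left_mono)
  also have "\<dots> \<le> s * ((norm u)\<^sup>2 + (norm v)\<^sup>2)"
    using s0 mult_left_mono[OF sum_squares_bound[of "norm u" "norm v"] s0]
    by (simp add: power2_eq_square algebra_simps)
  also have "\<dots> = quad_form (s *\<^sub>R mat 1) u + quad_form (s *\<^sub>R mat 1) v"
    by (simp add: quad_form_scaleR quad_form_mat algebra_simps)
  finally show "\<bar>2 * (u \<bullet> (V j *v v))\<bar> \<le> quad_form (s *\<^sub>R mat 1) u + quad_form (s *\<^sub>R mat 1) v" .
qed

definition Top_series :: "('s::finite \<Rightarrow> real^'d^'d) \<Rightarrow> ('s \<Rightarrow> real^'k^'d) \<Rightarrow> ('s \<Rightarrow> 's \<Rightarrow> real)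
    \<Rightarrow> ('s \<Rightarrow> real^'d^'k) \<Rightarrow> ('s \<Rightarrow> real^'d^'d) \<Rightarrow> 's \<Rightarrow> real^'d^'d" where
  "Top_series A B p K V = (\<lambda>i. \<Sum>t. (Top A B p K ^^ t) V i)"

definition Top_adj_series :: "('s::finite \<Rightarrow> real^'d^'d) \<Rightarrow> ('s \<Rightarrow> real^'k^'d) \<Rightarrow> ('s \<Rightarrow> 's \<Rightarrow> real)
    \<Rightarrow> ('s \<Rightarrow> real^'d^'k) \<Rightarrow> ('s \<Rightarrow> real^'d^'d) \<Rightarrow> 's \<Rightarrow> real^'d^'d" where
  "Top_adj_series A B p K M = (\<lambda>i. \<Sum>t. (Top_adj A B p K ^^ t) M i)"

locale geom_decay =
  fixes A :: "'s::finite \<Rightarrow> real^'d::finite^'d" and B :: "'s \<Rightarrow> real^'k::finite^'d"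
    and p :: "'s \<Rightarrow> 's \<Rightarrow> real" and K :: "'s \<Rightarrow> real^'d^'k" and c \<rho> :: real
  assumes p_nonneg: "\<And>i j. 0 \<le> p i j" and c_nonneg: "0 \<le> c"
    and \<rho>_nonneg: "0 \<le> \<rho>" and \<rho>_less_1: "\<rho> < 1"
    and decay: "\<And>t j x. quad_form ((Top A B p K ^^ t) (\<lambda>i. mat 1) j) x \<le> c * \<rho> ^ t * (norm x)\<^sup>2"
begin

abbreviation "T \<equiv> Top A B p K"
abbreviation "L \<equiv> Top_adj A B p K"

lemma Top_power_entry_bound:
  "\<bar>(T ^^ t) V j $ a $ b\<bar> \<le> (\<Sum>i\<in>UNIV. spec_norm (V i)) * c * \<rho> ^ t"
proof -
  define s where "s = (\<Sum>i\<in>UNIV. spec_norm (V i))"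
  have s0: "0 \<le> s" by (simp add: s_def sum_nonneg spec_norm_nonneg)
  have "form_dominated V (\<lambda>i. s *\<^sub>R mat 1)"
    by (rule form_dominated_spec_norm) (auto simp: s_def intro!: member_le_sum spec_norm_nonneg)
  then have "form_dominated ((T ^^ t) V) ((T ^^ t) (\<lambda>i. s *\<^sub>R mat 1))"
    by (induction t) (simp_all add: form_dominated_Top[OF p_nonneg])
  then have "\<bar>2 * (axis a 1 \<bullet> ((T ^^ t) V j *v axis b 1))\<bar> \<le>
      quad_form ((T ^^ t) (\<lambda>i. s *\<^sub>R mat 1) j) (axis a 1)
      + quad_form ((T ^^ t) (\<lambda>i. s *\<^sub>R mat 1) j) (axis b 1)"
    unfolding form_dominated_def by blast
  also have "\<dots> = s * quad_form ((T ^^ t) (\<lambda>i. mat 1) j) (axis a 1)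
      + s * quad_form ((T ^^ t) (\<lambda>i. mat 1) j) (axis b 1)"
    by (simp add: Top_power_scaleR quad_form_scaleR)
  also have "\<dots> \<le> s * (c * \<rho> ^ t) + s * (c * \<rho> ^ t)"
    using decay[of t j "axis a 1"] decay[of t j "axis b 1"] s0
    by (intro add_mono mult_left_mono) (auto simp: norm_axis_1)
  finally show ?thesis by (simp add: inner_axis_matrix s_def mult_ac)
qed

lemma summable_Top_power: "summable (\<lambda>t. (T ^^ t) V j)"
  by (rule summable_matrix_geometric[OF Top_power_entry_bound \<rho>_nonneg \<rho>_less_1])

text \<open>Entries of \<open>L\<^sup>t M\<close> are pairings of \<open>M\<close> with \<open>T\<^sup>t\<close> applied to unit tuples.\<close>

lemma Top_adj_power_entry_bound:
  "\<bar>(L ^^ t) M i $ b $ a\<bar> \<le> (\<Sum>i\<in>UNIV. \<Sum>a\<in>UNIV. \<Sum>b\<in>UNIV. \<bar>M i $ a $ b\<bar>) * c * \<rho> ^ t"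
proof -
  let ?m = "\<Sum>i\<in>UNIV. \<Sum>a\<in>UNIV. \<Sum>b\<in>UNIV. \<bar>M i $ a $ b\<bar>"
  have "(L ^^ t) M i $ b $ a = trace_pairing M ((T ^^ t) (unit_tuple i a b))"
    by (simp add: trace_pairing_Top_power trace_pairing_unit_tuple)
  then have "\<bar>(L ^^ t) M i $ b $ a\<bar>
      \<le> ?m * ((\<Sum>j\<in>UNIV. spec_norm (unit_tuple i a b j)) * c * \<rho> ^ t)"
    by (simp only: abs_trace_pairing_le[OF Top_power_entry_bound])
  also have "\<dots> \<le> ?m * (1 * c * \<rho> ^ t)"
    using spec_norm_unit_tuple_sum[of i a b] c_nonneg \<rho>_nonneg
    by (intro mult_left_mono mult_right_mono) (auto intro!: sum_nonneg)
  finally show ?thesis by (simp add: mult_ac)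
qed

lemma summable_Top_adj_power: "summable (\<lambda>t. (L ^^ t) M i)"
  by (rule summable_matrix_geometric[OF Top_adj_power_entry_bound \<rho>_nonneg \<rho>_less_1])

lemma Top_adj_fixpoint_zero:
  assumes "\<And>i. D i = L D i"
  shows "D i = 0"
proof -
  have "L D = D" using assms by (simp add: fun_eq_iff)
  then have Dt: "(L ^^ t) D = D" for t by (induction t) simp_all
  have "D i $ b $ a = 0" for a b
  proof -
    let ?m = "\<Sum>i\<in>UNIV. \<Sum>a\<in>UNIV. \<Sum>b\<in>UNIV. \<bar>D i $ a $ b\<bar>"
    have "(\<lambda>t. ?m * c * \<rho> ^ t) \<longlonglongrightarrow> ?m * c * 0"
      using \<rho>_nonneg \<rho>_less_1 by (intro tendsto_mult tendsto_const LIMSEQ_power_zero) simp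
    then have "\<bar>D i $ b $ a\<bar> \<le> 0"
      using Top_adj_power_entry_bound[of _ D i b a] by (intro LIMSEQ_le_const) (auto simp: Dt)
    then show ?thesis by simp
  qed
  then show ?thesis by (simp add: vec_eq_iff)
qed

lemma Top_suminf:
  assumes "\<And>i. summable (\<lambda>t. F t i)"
  shows "T (\<lambda>i. \<Sum>t. F t i) j = (\<Sum>t. T (F t) j)"
proof -
  let ?G = "Gam A B K"
  let ?f = "\<lambda>i X. p i j *\<^sub>R (?G i ** X ** transpose (?G i))"
  have lin: "bounded_linear (?f i)" for i
    by (rule bounded_linear_compose[OF bounded_linear_scaleR_right bounded_linear_congruence])
  have "T (\<lambda>i. \<Sum>t. F t i) j = (\<Sum>i\<in>UNIV. \<Sum>t. ?f i (F t i))"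
    unfolding Top_def by (intro sum.cong refl bounded_linear.suminf[OF lin assms])
  also have "\<dots> = (\<Sum>t. \<Sum>i\<in>UNIV. ?f i (F t i))"
    by (intro suminf_sum[symmetric] bounded_linear.summable[OF lin assms])
  finally show ?thesis by (simp add: Top_def)
qed

lemma Top_adj_suminf:
  assumes "\<And>i. summable (\<lambda>t. F t i)"
  shows "L (\<lambda>i. \<Sum>t. F t i) j = (\<Sum>t. L (F t) j)"
proof -
  let ?G = "Gam A B K"
  have lin: "bounded_linear ((*\<^sub>R) (p j i) :: real^'d^'d \<Rightarrow> _)" for i
    by (rule bounded_linear_scaleR_right)
  have E: "Eop p (\<lambda>i. \<Sum>t. F t i) j = (\<Sum>t. Eop p (F t) j)"
  proof -
    have "Eop p (\<lambda>i. \<Sum>t. F t i) j = (\<Sum>i\<in>UNIV. \<Sum>t. p j i *\<^sub>R F t i)"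
      unfolding Eop_def by (intro sum.cong refl bounded_linear.suminf[OF lin assms])
    also have "\<dots> = (\<Sum>t. \<Sum>i\<in>UNIV. p j i *\<^sub>R F t i)"
      by (intro suminf_sum[symmetric] bounded_linear.summable[OF lin assms])
    finally show ?thesis by (simp add: Eop_def)
  qed
  have "summable (\<lambda>t. Eop p (F t) j)"
    unfolding Eop_def by (intro summable_sum bounded_linear.summable[OF lin assms])
  then have "transpose (?G j) ** (\<Sum>t. Eop p (F t) j) ** ?G j = (\<Sum>t. transpose (?G j) ** Eop p (F t) j ** ?G j)"
    by (rule bounded_linear.suminf[OF bounded_linear_congruence])
  then show ?thesis by (simp add: Top_adj_def E)
qed

lemma Top_Top_series: "T (Top_series A B p K V) j = Top_series A B p K V j - V j"
proof -
  have "T (Top_series A B p K V) j = (\<Sum>t. (T ^^ Suc t) V j)"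
    unfolding Top_series_def by (simp add: Top_suminf summable_Top_power)
  also have "\<dots> = Top_series A B p K V j - V j"
    unfolding Top_series_def using suminf_split_head[OF summable_Top_power[of V j]] by simp
  finally show ?thesis .
qed

lemma Top_adj_series_eq: "Top_adj_series A B p K M i = M i + L (Top_adj_series A B p K M) i"
proof -
  have "L (Top_adj_series A B p K M) i = (\<Sum>t. (L ^^ Suc t) M i)"
    unfolding Top_adj_series_def by (simp add: Top_adj_suminf summable_Top_adj_power)
  also have "\<dots> = Top_adj_series A B p K M i - M i"
    unfolding Top_adj_series_def using suminf_split_head[OF summable_Top_adj_power[of M i]] by simp
  finally show ?thesis by simp
qed

lemma psd_tuple_Top_series: "psd_tuple V \<Longrightarrow> psd_tuple (Top_series A B p K V)"
  unfolding Top_series_def psd_tuple_def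
  by (auto intro!: psd_mat_suminf summable_Top_power
      psd_tuple_Top_power[OF p_nonneg, unfolded psd_tuple_def, rule_format])

lemma psd_tuple_Top_adj_series: "psd_tuple M \<Longrightarrow> psd_tuple (Top_adj_series A B p K M)"
  unfolding Top_adj_series_def psd_tuple_def
  by (auto intro!: psd_mat_suminf summable_Top_adj_power
      psd_tuple_Top_adj_power[OF p_nonneg, unfolded psd_tuple_def, rule_format])

lemma quad_form_le_Top_series:
  assumes "psd_tuple V"
  shows "quad_form (V i) x \<le> quad_form (Top_series A B p K V i) x"
proof -
  have "psd_tuple (T (Top_series A B p K V))"
    by (rule psd_tuple_Top[OF p_nonneg psd_tuple_Top_series[OF assms]])
  then have "0 \<le> quad_form (T (Top_series A B p K V) i) x"
    by (simp add: psd_tuple_def psd_mat_quad_form_nonneg)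
  then show ?thesis by (simp add: Top_Top_series quad_form_diff)
qed

lemma quad_form_le_Top_adj_series:
  assumes "psd_tuple M"
  shows "quad_form (M i) x \<le> quad_form (Top_adj_series A B p K M i) x"
proof -
  have "psd_tuple (L (Top_adj_series A B p K M))"
    by (rule psd_tuple_Top_adj[OF p_nonneg psd_tuple_Top_adj_series[OF assms]])
  then have "0 \<le> quad_form (L (Top_adj_series A B p K M) i) x"
    by (simp add: psd_tuple_def psd_mat_quad_form_nonneg)
  then show ?thesis by (subst Top_adj_series_eq) (simp add: quad_form_add)
qed

text \<open>The coupled Lyapunov equation in the definition of \<open>Pmat\<close> has exactly one solution,
  so \<open>THE\<close> picks the series.\<close>

lemma Pmat_eq_Top_adj_series: "Pmat A B p Q R K = Top_adj_series A B p K (stage_cost Q R K)"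
  unfolding Pmat_def
proof (rule the_equality)
  let ?P = "Top_adj_series A B p K (stage_cost Q R K)"
  show "\<forall>i. ?P i = Q i + transpose (K i) ** R i ** K i + transpose (Gam A B K i) ** Eop p ?P i ** Gam A B K i"
    using Top_adj_series_eq[of "stage_cost Q R K"] by (simp add: stage_cost_def Top_adj_def)
  fix P
  assume "\<forall>i. P i = Q i + transpose (K i) ** R i ** K i + transpose (Gam A B K i) ** Eop p P i ** Gam A B K i"
  then have hP: "P i = stage_cost Q R K i + L P i" for i by (simp add: stage_cost_def Top_adj_def)
  have "P i - ?P i = L (\<lambda>i. P i - ?P i) i" for i
    using hP[of i] Top_adj_series_eq[of "stage_cost Q R K" i] by (simp add: Top_adj_diff)
  then have "P i - ?P i = 0" for i by (rule Top_adj_fixpoint_zero)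
  then show "P = ?P" by (simp add: fun_eq_iff)
qed

lemma Xmat_eq_Top_series: "Xmat A B p \<pi> \<Sigma> K = Top_series A B p K (X0 \<pi> \<Sigma>)"
  by (simp add: Xmat_def Top_series_def state_cov_def fun_eq_iff)

lemma cost_eq_trace_pairing_Pmat:
  "cost A B p \<pi> \<Sigma> Q R K = trace_pairing (Pmat A B p Q R K) (X0 \<pi> \<Sigma>)"
proof -
  let ?M = "stage_cost Q R K" and ?X = "X0 \<pi> \<Sigma>"
  have "cost A B p \<pi> \<Sigma> Q R K = (\<Sum>t. trace_pairing ?M ((T ^^ t) ?X))"
    by (simp add: cost_def trace_pairing_def stage_cost_def state_cov_def)
  also have "\<dots> = (\<Sum>t. trace_pairing ((L ^^ t) ?M) ?X)"
    by (simp only: trace_pairing_Top_power)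
  also have "\<dots> = (\<Sum>i\<in>UNIV. \<Sum>t. trace ((L ^^ t) ?M i ** ?X i))"
    unfolding trace_pairing_def
    by (rule suminf_sum)
      (rule bounded_linear.summable[OF bounded_linear_trace_mult_left summable_Top_adj_power])
  also have "\<dots> = trace_pairing (Pmat A B p Q R K) ?X"
    by (simp add: Pmat_eq_Top_adj_series Top_adj_series_def trace_pairing_def
        bounded_linear.suminf[OF bounded_linear_trace_mult_left summable_Top_adj_power])
  finally show ?thesis .
qed

lemma cost_eq_trace_pairing_Xmat:
  "cost A B p \<pi> \<Sigma> Q R K = trace_pairing (stage_cost Q R K) (Xmat A B p \<pi> \<Sigma> K)"
proof -
  let ?M = "stage_cost Q R K" and ?X = "X0 \<pi> \<Sigma>"
  have "cost A B p \<pi> \<Sigma> Q R K = (\<Sum>t. \<Sum>i\<in>UNIV. trace (?M i ** (T ^^ t) ?X i))"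
    by (simp add: cost_def stage_cost_def state_cov_def)
  also have "\<dots> = (\<Sum>i\<in>UNIV. \<Sum>t. trace (?M i ** (T ^^ t) ?X i))"
    by (rule suminf_sum)
      (rule bounded_linear.summable[OF bounded_linear_trace_mult_right summable_Top_power])
  also have "\<dots> = trace_pairing ?M (Xmat A B p \<pi> \<Sigma> K)"
    by (simp add: Xmat_eq_Top_series Top_series_def trace_pairing_def
        bounded_linear.suminf[OF bounded_linear_trace_mult_right summable_Top_power])
  finally show ?thesis .
qed

end

lemma ms_stable_geom_decay:
  fixes A :: "'s::finite \<Rightarrow> real^'d::finite^'d" and B :: "'s \<Rightarrow> real^'k::finite^'d"
  assumes "\<And>i j. 0 \<le> p i j" "ms_stable A B p K"
  obtains c \<rho> where "geom_decay A B p K c \<rho>"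
  using ms_stable_geometric_decay[OF assms] assms(1) unfolding geom_decay_def by blast

section \<open>Cost, value matrix and state covariance of a stabilising gain\<close>

lemma Min_range_le: "Min (range (f::'s::finite \<Rightarrow> real)) \<le> f i"
  by (rule Min_le) auto

lemma Max_range_ge: "f i \<le> Max (range (f::'s::finite \<Rightarrow> real))"
  by (rule Max_ge) auto

lemma Min_range_pos: "(\<And>i. 0 < f i) \<Longrightarrow> 0 < Min (range (f::'s::finite \<Rightarrow> real))"
  by (subst Min_gr_iff) auto

lemma spec_norm_le_max_norm: "spec_norm (V i) \<le> max_norm V"
  unfolding max_norm_def by (rule Max_range_ge)

lemma Gam_mult_vector: "Gam A B K i *v x = A i *v x - B i *v (K i *v x)"
  by (simp add: Gam_def matrix_vector_mult_diff_rdistrib matrix_vector_mul_assoc)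

locale mjls_lq =
  fixes A :: "'s::finite \<Rightarrow> real^'d::finite^'d"
    and B :: "'s \<Rightarrow> real^'k::finite^'d"
    and p :: "'s \<Rightarrow> 's \<Rightarrow> real"
    and \<pi> :: "'s \<Rightarrow> real"
    and \<Sigma> :: "real^'d^'d"
    and Q :: "'s \<Rightarrow> real^'d^'d"
    and R :: "'s \<Rightarrow> real^'k^'k"
  assumes p_nonneg: "\<And>i j. 0 \<le> p i j"
    and p_stoch: "\<And>i. (\<Sum>j\<in>UNIV. p i j) = 1"
    and pi_pos: "\<And>i. 0 < \<pi> i"
    and Sigma_pd: "pd_mat \<Sigma>"
    and Q_pd: "\<And>i. pd_mat (Q i)"
    and R_pd: "\<And>i. pd_mat (R i)"
begin

abbreviation "C K \<equiv> cost A B p \<pi> \<Sigma> Q R K"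
abbreviation "Pk K \<equiv> Pmat A B p Q R K"
abbreviation "EPk K i \<equiv> Eop p (Pk K) i"
abbreviation "Mk K i \<equiv> R i + transpose (B i) ** EPk K i ** B i"
abbreviation "Lk K i \<equiv> Lmat A B p Q R K i"
abbreviation "Xk K \<equiv> Xmat A B p \<pi> \<Sigma> K"
abbreviation "\<mu> \<equiv> mu \<pi> \<Sigma>"

lemma psd_tuple_X0: "psd_tuple (X0 \<pi> \<Sigma>)"
  unfolding psd_tuple_def X0_def
  using pi_pos by (auto intro!: psd_mat_scaleR[OF pd_imp_psd_mat[OF Sigma_pd]] less_imp_le)

lemma mu_pos: "0 < \<mu>"
  unfolding mu_def using pi_pos pd_mat_sigma_min_pos[OF Sigma_pd] by (intro Min_range_pos) simp

lemma quad_form_X0_ge: "\<mu> * (norm x)\<^sup>2 \<le> quad_form (X0 \<pi> \<Sigma> i) x"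
proof -
  have "\<mu> * (norm x)\<^sup>2 \<le> \<pi> i * sigma_min \<Sigma> * (norm x)\<^sup>2"
    unfolding mu_def by (intro mult_right_mono Min_range_le) auto
  also have "\<dots> \<le> \<pi> i * quad_form \<Sigma> x"
    using psd_mat_sigma_min_quad_form[OF pd_imp_psd_mat[OF Sigma_pd], of x] pi_pos[of i]
    by (simp add: mult.assoc mult_left_mono)
  finally show ?thesis by (simp add: X0_def quad_form_scaleR)
qed

lemma psd_tuple_stage_cost: "psd_tuple (stage_cost Q R K)"
  unfolding psd_tuple_def stage_cost_def
  by (auto intro!: psd_mat_add[OF pd_imp_psd_mat[OF Q_pd]] psd_mat_congruence[OF pd_imp_psd_mat[OF R_pd]])

lemma quad_form_stage_cost: "quad_form (stage_cost Q R K i) x = quad_form (Q i) x + quad_form (R i) (K i *v x)"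
  by (simp add: stage_cost_def quad_form_add quad_form_congruence)

lemma Lambda_min_pos: "(\<And>i. pd_mat (V i)) \<Longrightarrow> 0 < Lambda_min V"
  unfolding Lambda_min_def by (intro Min_range_pos pd_mat_sigma_min_pos)

lemma quad_form_ge_Lambda_min:
  assumes "\<And>i. pd_mat (V i)"
  shows "Lambda_min V * (norm x)\<^sup>2 \<le> quad_form (V i) x"
proof -
  have "Lambda_min V * (norm x)\<^sup>2 \<le> sigma_min (V i) * (norm x)\<^sup>2"
    unfolding Lambda_min_def by (intro mult_right_mono Min_range_le) auto
  also have "\<dots> \<le> quad_form (V i) x" by (rule psd_mat_sigma_min_quad_form[OF pd_imp_psd_mat[OF assms]])
  finally show ?thesis .
qed

lemma Lambda_min_R_pos: "0 < Lambda_min R"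
  by (rule Lambda_min_pos[OF R_pd])

lemma quad_form_Q_ge: "Lambda_min Q * (norm x)\<^sup>2 \<le> quad_form (Q i) x"
  by (rule quad_form_ge_Lambda_min[OF Q_pd])

lemma Lambda_min_R_le_max_norm: "Lambda_min R \<le> max_norm R"
proof -
  have "Lambda_min R \<le> sigma_min (R undefined)" unfolding Lambda_min_def by (rule Min_range_le)
  also have "\<dots> \<le> spec_norm (R undefined)" by (rule sigma_min_le_spec_norm)
  also have "\<dots> \<le> max_norm R" by (rule spec_norm_le_max_norm)
  finally show ?thesis .
qed

context
  fixes K :: "'s \<Rightarrow> real^'d^'k"
  assumes stable: "ms_stable A B p K"
begin

lemma Pk_eq_Top_adj_series: "Pk K = Top_adj_series A B p K (stage_cost Q R K)"
  by (rule ms_stable_geom_decay[OF p_nonneg stable]) (erule geom_decay.Pmat_eq_Top_adj_series)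

lemma psd_tuple_Pk: "psd_tuple (Pk K)"
  unfolding Pk_eq_Top_adj_series
  by (rule ms_stable_geom_decay[OF p_nonneg stable])
    (erule geom_decay.psd_tuple_Top_adj_series, rule psd_tuple_stage_cost)

lemma Pk_Lyapunov: "Pk K i = stage_cost Q R K i + Top_adj A B p K (Pk K) i"
  unfolding Pk_eq_Top_adj_series
  by (rule ms_stable_geom_decay[OF p_nonneg stable]) (erule geom_decay.Top_adj_series_eq)

lemma quad_form_Q_le_Pk: "quad_form (Q i) x \<le> quad_form (Pk K i) x"
proof -
  have "quad_form (stage_cost Q R K i) x \<le> quad_form (Pk K i) x"
    unfolding Pk_eq_Top_adj_series
    by (rule ms_stable_geom_decay[OF p_nonneg stable])
      (erule geom_decay.quad_form_le_Top_adj_series, rule psd_tuple_stage_cost)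
  moreover have "0 \<le> quad_form (R i) (K i *v x)"
    by (rule psd_mat_quad_form_nonneg[OF pd_imp_psd_mat[OF R_pd]])
  ultimately show ?thesis by (simp add: quad_form_stage_cost)
qed

lemma cost_eq_Pk: "C K = trace_pairing (Pk K) (X0 \<pi> \<Sigma>)"
  by (rule ms_stable_geom_decay[OF p_nonneg stable]) (erule geom_decay.cost_eq_trace_pairing_Pmat)

lemma cost_eq_Xk: "C K = trace_pairing (stage_cost Q R K) (Xk K)"
  by (rule ms_stable_geom_decay[OF p_nonneg stable]) (erule geom_decay.cost_eq_trace_pairing_Xmat)

lemma Xk_eq_Top_series: "Xk K = Top_series A B p K (X0 \<pi> \<Sigma>)"
  by (rule ms_stable_geom_decay[OF p_nonneg stable]) (erule geom_decay.Xmat_eq_Top_series)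

lemma psd_tuple_Xk: "psd_tuple (Xk K)"
  unfolding Xk_eq_Top_series
  by (rule ms_stable_geom_decay[OF p_nonneg stable])
    (erule geom_decay.psd_tuple_Top_series, rule psd_tuple_X0)

lemma quad_form_Xk_ge: "\<mu> * (norm x)\<^sup>2 \<le> quad_form (Xk K i) x"
proof -
  have "quad_form (X0 \<pi> \<Sigma> i) x \<le> quad_form (Xk K i) x"
    unfolding Xk_eq_Top_series
    by (rule ms_stable_geom_decay[OF p_nonneg stable])
      (erule geom_decay.quad_form_le_Top_series, rule psd_tuple_X0)
  then show ?thesis using quad_form_X0_ge[of x i] by linarith
qed

lemma Top_Xk: "Top A B p K (Xk K) j = Xk K j - X0 \<pi> \<Sigma> j"
  unfolding Xk_eq_Top_series
  by (rule ms_stable_geom_decay[OF p_nonneg stable]) (erule geom_decay.Top_Top_series)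

lemma cost_nonneg: "0 \<le> C K"
  unfolding cost_eq_Pk by (rule trace_pairing_psd_nonneg[OF psd_tuple_Pk psd_tuple_X0])

lemma mu_le_max_norm_Xk: "\<mu> \<le> max_norm (Xk K)"
proof -
  let ?e = "axis undefined 1 :: real^'d"
  have "\<mu> = \<mu> * (norm ?e)\<^sup>2" by (simp add: norm_axis_1)
  also have "\<dots> \<le> quad_form (Xk K undefined) ?e" by (rule quad_form_Xk_ge)
  also have "\<dots> \<le> spec_norm (Xk K undefined)"
    using quad_form_le_spec_norm[of _ ?e] by (simp add: norm_axis_1)
  also have "\<dots> \<le> max_norm (Xk K)" by (rule spec_norm_le_max_norm)
  finally show ?thesis .
qed

lemma psd_mat_EPk: "psd_mat (EPk K i)"
  by (rule psd_mat_Eop[where p=p, OF p_nonneg psd_tuple_Pk])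

lemma EPk_symmetric: "transpose (EPk K i) = EPk K i"
  using psd_mat_EPk by (simp add: psd_mat_def)

text \<open>Since \<open>X0\<close> dominates \<open>\<mu> I\<close> in every mode, \<open>\<mu> tr P\<^sub>j \<le> C(K)\<close>.\<close>

lemma spec_norm_Pk_le: "spec_norm (Pk K j) \<le> C K / \<mu>"
proof -
  have psdP: "psd_mat (Pk K i)" for i using psd_tuple_Pk by (simp add: psd_tuple_def)
  have trP: "0 \<le> trace (Pk K i)" for i by (rule psd_mat_trace_nonneg[OF psdP])
  have "\<mu> * trace (Pk K i) \<le> trace (Pk K i ** X0 \<pi> \<Sigma> i)" for i
    using trace_mult_psd_ge[OF psdP[of i] quad_form_X0_ge[of _ i]] trace_mul_sym[of "X0 \<pi> \<Sigma> i" "Pk K i"]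
    by simp
  then have "(\<Sum>i\<in>UNIV. \<mu> * trace (Pk K i)) \<le> C K"
    unfolding cost_eq_Pk trace_pairing_def by (rule sum_mono)
  moreover have "\<mu> * trace (Pk K j) \<le> (\<Sum>i\<in>UNIV. \<mu> * trace (Pk K i))"
    by (rule member_le_sum) (use mu_pos trP in auto)
  ultimately have "\<mu> * trace (Pk K j) \<le> C K" by linarith
  then have "trace (Pk K j) \<le> C K / \<mu>" using mu_pos by (simp add: field_simps)
  then show ?thesis using psd_mat_spec_norm_le_trace[OF psdP[of j]] by simp
qed

lemma spec_norm_EPk_le: "spec_norm (EPk K i) \<le> C K / \<mu>"
proof -
  have "spec_norm (EPk K i) \<le> (\<Sum>j\<in>UNIV. spec_norm (p i j *\<^sub>R Pk K j))"
    unfolding Eop_def by (rule spec_norm_sum) simp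
  also have "\<dots> \<le> (\<Sum>j\<in>UNIV. p i j * (C K / \<mu>))"
  proof (rule sum_mono)
    fix j
    have "spec_norm (p i j *\<^sub>R Pk K j) \<le> p i j * spec_norm (Pk K j)"
      using spec_norm_scaleR[of "p i j" "Pk K j"] p_nonneg[of i j] by simp
    also have "\<dots> \<le> p i j * (C K / \<mu>)" by (intro mult_left_mono spec_norm_Pk_le p_nonneg)
    finally show "spec_norm (p i j *\<^sub>R Pk K j) \<le> p i j * (C K / \<mu>)" .
  qed
  also have "\<dots> = C K / \<mu>" by (simp only: sum_distrib_right[symmetric] p_stoch mult_1)
  finally show ?thesis .
qed

lemma spec_norm_Mk_le: "spec_norm (Mk K i) \<le> max_norm R + (max_norm B)\<^sup>2 * (C K / \<mu>)"
proof -
  have "spec_norm (transpose (B i) ** EPk K i ** B i)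
      \<le> spec_norm (transpose (B i) ** EPk K i) * spec_norm (B i)"
    by (rule spec_norm_mult)
  also have "\<dots> \<le> spec_norm (transpose (B i)) * spec_norm (EPk K i) * spec_norm (B i)"
    by (intro mult_right_mono spec_norm_mult spec_norm_nonneg)
  also have "\<dots> \<le> spec_norm (B i) * spec_norm (EPk K i) * spec_norm (B i)"
    by (intro mult_right_mono spec_norm_transpose_le spec_norm_nonneg)
  also have "\<dots> = (spec_norm (B i))\<^sup>2 * spec_norm (EPk K i)" by (simp add: power2_eq_square)
  also have "\<dots> \<le> (max_norm B)\<^sup>2 * (C K / \<mu>)"
    using spec_norm_le_max_norm[of B i] spec_norm_EPk_le[of i]
    by (intro mult_mono power_mono spec_norm_nonneg) (auto intro: order_trans[OF spec_norm_nonneg])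
  finally show ?thesis
    using spec_norm_add[of "R i" "transpose (B i) ** EPk K i ** B i"] spec_norm_le_max_norm[of R i]
    by simp
qed

lemma quad_form_Mk_ge: "sigma_min (R i) * (norm x)\<^sup>2 \<le> quad_form (Mk K i) x"
proof -
  have "sigma_min (R i) * (norm x)\<^sup>2 \<le> quad_form (R i) x"
    by (rule psd_mat_sigma_min_quad_form[OF pd_imp_psd_mat[OF R_pd]])
  moreover have "0 \<le> quad_form (EPk K i) (B i *v x)"
    by (rule psd_mat_quad_form_nonneg[OF psd_mat_EPk])
  ultimately show ?thesis by (simp add: quad_form_add quad_form_congruence)
qed

end

end

section \<open>Cost difference and gradient domination\<close>

lemma quad_form_perturbation_identity:
  fixes R :: "real^'k^'k" and E :: "real^'d^'d" and B :: "real^'k^'d"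
  assumes "transpose R = R" and "transpose E = E"
  shows "quad_form R (y + d) - quad_form R y + (quad_form E (g - B *v d) - quad_form E g) =
     2 * (d \<bullet> (R *v y - transpose B *v (E *v g))) + (quad_form R d + quad_form E (B *v d))"
proof -
  have "quad_form E (g + (-1) *\<^sub>R (B *v d))
      = quad_form E g + 2 * (((-1) *\<^sub>R (B *v d)) \<bullet> (E *v g)) + quad_form E ((-1) *\<^sub>R (B *v d))"
    by (rule quad_form_add_vector[OF assms(2)])
  then have "quad_form E (g - B *v d) - quad_form E g = - 2 * ((B *v d) \<bullet> (E *v g)) + quad_form E (B *v d)"
    by (simp add: quad_form_uminus_vector)
  moreover have "d \<bullet> (transpose B *v (E *v g)) = (B *v d) \<bullet> (E *v g)"
    by (subst inner_matrix_transpose) simp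
  ultimately show ?thesis
    using quad_form_add_vector[OF assms(1), of y d] by (simp add: inner_diff_right algebra_simps)
qed

lemma completing_square_lower_bound:
  fixes d l :: "real^'n"
  assumes "0 < r" "r * (norm d)\<^sup>2 \<le> q"
  shows "- (norm l)\<^sup>2 / r \<le> 2 * (d \<bullet> l) + q"
proof -
  have "(norm (r *\<^sub>R d + l))\<^sup>2 = (r *\<^sub>R d + l) \<bullet> (r *\<^sub>R d + l)"
    by (simp only: power2_norm_eq_inner)
  also have "\<dots> = r * (r * (d \<bullet> d) + 2 * (d \<bullet> l)) + l \<bullet> l"
    by (simp add: inner_add_left inner_add_right inner_commute algebra_simps)
  finally have "0 \<le> r * (r * (norm d)\<^sup>2 + 2 * (d \<bullet> l)) + (norm l)\<^sup>2"
    by (metis power2_norm_eq_inner zero_le_power2)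
  then have "0 \<le> r * (q + 2 * (d \<bullet> l)) + (norm l)\<^sup>2"
    using assms by (smt (verit) mult_left_mono)
  then show ?thesis using assms(1) by (simp add: field_simps)
qed

lemma trace_mult_psd_le_spec_norm:
  assumes "psd_mat N"
  shows "trace (X ** N) \<le> spec_norm X * trace N"
  using assms quad_form_le_spec_norm by (rule trace_mult_psd_le)

context mjls_lq
begin

definition advantage :: "('s \<Rightarrow> real^'d^'k) \<Rightarrow> ('s \<Rightarrow> real^'d^'k) \<Rightarrow> 's \<Rightarrow> real^'d^'d" where
  "advantage K K' i = stage_cost Q R K' i + Top_adj A B p K' (Pk K) i - Pk K i"

definition Lk_frob_sq :: "('s \<Rightarrow> real^'d^'k) \<Rightarrow> real" where
  "Lk_frob_sq K = (\<Sum>i\<in>UNIV. trace (transpose (Lk K i) ** Lk K i))"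

lemma cost_difference:
  assumes "ms_stable A B p K" and "ms_stable A B p K'"
  shows "C K' - C K = trace_pairing (advantage K K') (Xk K')"
proof -
  have "Top A B p K' (Xk K') = (\<lambda>j. Xk K' j - X0 \<pi> \<Sigma> j)"
    using Top_Xk[OF assms(2)] by (simp add: fun_eq_iff)
  then have "trace_pairing (Top_adj A B p K' (Pk K)) (Xk K') = trace_pairing (Pk K) (\<lambda>j. Xk K' j - X0 \<pi> \<Sigma> j)"
    by (simp flip: trace_pairing_Top)
  then show ?thesis
    using cost_eq_Xk[OF assms(2)] cost_eq_Pk[OF assms(1)]
    unfolding advantage_def
    by (simp add: trace_pairing_diff_left[where P="\<lambda>i. _ i + _ i"] trace_pairing_add_left
        trace_pairing_diff_right)
qed

lemma Lk_mult_vector: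
  "Lk K i *v x = R i *v (K i *v x) - transpose (B i) *v (EPk K i *v (Gam A B K i *v x))"
  by (simp add: Lmat_def Gam_mult_vector matrix_vector_mult_diff_rdistrib
      matrix_vector_mult_add_rdistrib matrix_vector_mul_assoc[symmetric] matrix_vector_mult_diff_distrib)

lemma quad_form_advantage:
  assumes "ms_stable A B p K"
  shows "quad_form (advantage K K' i) x =
     2 * (((K' i - K i) *v x) \<bullet> (Lk K i *v x)) + quad_form (Mk K i) ((K' i - K i) *v x)"
proof -
  let ?y = "K i *v x" and ?d = "(K' i - K i) *v x" and ?g = "Gam A B K i *v x"
  have "K' i *v x = ?y + ?d" by (simp add: matrix_vector_mult_diff_rdistrib)
  moreover have "Gam A B K' i *v x = ?g - B i *v ?d"
    by (simp add: Gam_mult_vector matrix_vector_mult_diff_rdistrib matrix_vector_mult_diff_distrib)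
  moreover have "quad_form (Pk K i) x = quad_form (Q i) x + quad_form (R i) ?y + quad_form (EPk K i) ?g"
    by (subst Pk_Lyapunov[OF assms]) (simp add: quad_form_stage_cost quad_form_add Top_adj_def quad_form_congruence)
  ultimately have "quad_form (advantage K K' i) x
      = quad_form (R i) (?y + ?d) - quad_form (R i) ?y + (quad_form (EPk K i) (?g - B i *v ?d) - quad_form (EPk K i) ?g)"
    by (simp add: advantage_def quad_form_add quad_form_diff quad_form_stage_cost Top_adj_def
        quad_form_congruence)
  also have "\<dots> = 2 * (?d \<bullet> (R i *v ?y - transpose (B i) *v (EPk K i *v ?g)))
      + (quad_form (R i) ?d + quad_form (EPk K i) (B i *v ?d))"
    using R_pd[of i] EPk_symmetric[OF assms]
    by (intro quad_form_perturbation_identity) (simp_all add: pd_mat_def)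
  also have "\<dots> = 2 * (?d \<bullet> (Lk K i *v x)) + quad_form (Mk K i) ?d"
    by (simp add: Lk_mult_vector quad_form_add quad_form_congruence)
  finally show ?thesis .
qed

lemma quad_form_advantage_ge:
  assumes "ms_stable A B p K"
  shows "- (norm (Lk K i *v x))\<^sup>2 / Lambda_min R \<le> quad_form (advantage K K' i) x"
proof -
  let ?d = "(K' i - K i) *v x"
  have "Lambda_min R * (norm ?d)\<^sup>2 \<le> sigma_min (R i) * (norm ?d)\<^sup>2"
    unfolding Lambda_min_def by (intro mult_right_mono Min_range_le) auto
  also have "\<dots> \<le> quad_form (Mk K i) ?d" by (rule quad_form_Mk_ge[OF assms])
  finally show ?thesis
    unfolding quad_form_advantage[OF assms]
    by (rule completing_square_lower_bound[OF Lambda_min_R_pos])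
qed

lemma gradient_domination:
  assumes st: "ms_stable A B p K" and st': "ms_stable A B p K'"
  shows "C K - C K' \<le> max_norm (Xk K') / Lambda_min R * Lk_frob_sq K"
proof -
  let ?r = "Lambda_min R" and ?N = "\<lambda>i. transpose (Lk K i) ** Lk K i"
  have r0: "0 < ?r" by (rule Lambda_min_R_pos)
  have Xpsd: "psd_mat (Xk K' i)" for i using psd_tuple_Xk[OF st'] by (simp add: psd_tuple_def)
  have "- (max_norm (Xk K') / ?r) * trace (?N i) \<le> trace (advantage K K' i ** Xk K' i)" for i
  proof -
    have "trace (?N i ** Xk K' i) = trace (Xk K' i ** ?N i)" by (rule trace_mul_sym)
    also have "\<dots> \<le> spec_norm (Xk K' i) * trace (?N i)"
      by (rule trace_mult_psd_le_spec_norm[OF psd_mat_transpose_mult_self])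
    also have "\<dots> \<le> max_norm (Xk K') * trace (?N i)"
      by (intro mult_right_mono spec_norm_le_max_norm psd_mat_trace_nonneg psd_mat_transpose_mult_self)
    finally have "trace (?N i ** Xk K' i) \<le> max_norm (Xk K') * trace (?N i)" .
    then have "(- 1 / ?r) * (max_norm (Xk K') * trace (?N i)) \<le> (- 1 / ?r) * trace (?N i ** Xk K' i)"
      using r0 by (intro mult_left_mono_neg) auto
    then have "- (max_norm (Xk K') / ?r) * trace (?N i) \<le> trace (((- 1 / ?r) *\<^sub>R ?N i) ** Xk K' i)"
      by (simp only: matrix_scaleR_left trace_scaleR) simp
    also have "\<dots> \<le> trace (advantage K K' i ** Xk K' i)"
    proof (rule trace_mult_psd_mono[OF Xpsd])
      fix x
      have "quad_form ((- 1 / ?r) *\<^sub>R ?N i) x = - (norm (Lk K i *v x))\<^sup>2 / ?r"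
        by (simp only: quad_form_scaleR quad_form_transpose_mult_self) simp
      then show "quad_form ((- 1 / ?r) *\<^sub>R ?N i) x \<le> quad_form (advantage K K' i) x"
        using quad_form_advantage_ge[OF st] by simp
    qed
    finally show ?thesis .
  qed
  then have "- (max_norm (Xk K') / ?r) * Lk_frob_sq K \<le> trace_pairing (advantage K K') (Xk K')"
    unfolding Lk_frob_sq_def trace_pairing_def sum_distrib_left by (rule sum_mono)
  then show ?thesis using cost_difference[OF st st'] by simp
qed

end

section \<open>One step of natural policy gradient\<close>

lemma Top_adj_power_contraction:
  assumes p_nonneg: "\<And>i j. 0 \<le> p i j" and \<theta>: "0 \<le> \<theta>"
    and contr: "\<And>i x. quad_form (Top_adj A B p K P i) x \<le> \<theta> * quad_form (P i) x"
  shows "quad_form ((Top_adj A B p K ^^ t) P i) x \<le> \<theta> ^ t * quad_form (P i) x"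
proof (induction t arbitrary: i x)
  case 0 then show ?case by simp
next
  case (Suc t)
  have "quad_form ((Top_adj A B p K ^^ Suc t) P i) x = quad_form ((Top_adj A B p K ^^ t) (Top_adj A B p K P) i) x"
    by (simp add: funpow_Suc_right del: funpow.simps)
  also have "\<dots> \<le> quad_form ((Top_adj A B p K ^^ t) (\<lambda>i. \<theta> *\<^sub>R P i) i) x"
    by (rule Top_adj_power_quad_form_mono[OF p_nonneg]) (simp add: quad_form_scaleR contr)
  also have "\<dots> \<le> \<theta> * (\<theta> ^ t * quad_form (P i) x)"
    using Suc \<theta> by (simp add: Top_adj_power_scaleR quad_form_scaleR mult_left_mono)
  finally show ?case by (simp add: mult.assoc)
qed

lemma trace_Top_power_le_Lyapunov:
  assumes p_nonneg: "\<And>i j. 0 \<le> p i j" and V: "psd_tuple V" and q: "0 \<le> q"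
    and P_ge: "\<And>i x. q * (norm x)\<^sup>2 \<le> quad_form (P i) x"
    and \<theta>: "0 \<le> \<theta>"
    and contr: "\<And>i x. quad_form (Top_adj A B p K P i) x \<le> \<theta> * quad_form (P i) x"
  shows "q * trace ((Top A B p K ^^ t) V j) \<le> \<theta> ^ t * trace_pairing P V"
proof -
  let ?W = "(Top A B p K ^^ t) V"
  have "psd_tuple ?W" by (rule psd_tuple_Top_power[OF p_nonneg V])
  then have W: "psd_mat (?W i)" for i by (simp add: psd_tuple_def)
  have "q * trace (?W j) \<le> (\<Sum>i\<in>UNIV. q * trace (?W i))"
    by (rule member_le_sum) (use q psd_mat_trace_nonneg[OF W] in auto)
  also have "\<dots> \<le> trace_pairing P ?W"
    unfolding trace_pairing_def by (intro sum_mono trace_mult_psd_ge[OF W P_ge])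
  also have "\<dots> = (\<Sum>i\<in>UNIV. trace ((Top_adj A B p K ^^ t) P i ** V i))"
    by (simp only: trace_pairing_Top_power) (simp only: trace_pairing_def)
  also have "\<dots> \<le> (\<Sum>i\<in>UNIV. trace ((\<theta> ^ t *\<^sub>R P i) ** V i))"
    using V Top_adj_power_contraction[OF p_nonneg \<theta> contr]
    by (intro sum_mono trace_mult_psd_mono) (auto simp: psd_tuple_def quad_form_scaleR)
  also have "\<dots> = \<theta> ^ t * trace_pairing P V"
    by (simp add: trace_pairing_def matrix_scaleR_left trace_scaleR sum_distrib_left)
  finally show ?thesis .
qed

lemma ms_stable_of_Lyapunov_contraction:
  fixes A :: "'s::finite \<Rightarrow> real^'d::finite^'d"
  assumes p_nonneg: "\<And>i j. 0 \<le> p i j" and q: "0 < q"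
    and P_ge: "\<And>i x. q * (norm x)\<^sup>2 \<le> quad_form (P i) x"
    and \<theta>: "0 \<le> \<theta>" "\<theta> < 1"
    and contr: "\<And>i x. quad_form (Top_adj A B p K P i) x \<le> \<theta> * quad_form (P i) x"
  shows "ms_stable A B p K"
  unfolding ms_stable_def
proof (intro allI impI)
  fix V :: "'s \<Rightarrow> real^'d^'d" and j
  assume "\<forall>i. psd_mat (V i)"
  then have V: "psd_tuple V" by (simp add: psd_tuple_def)
  let ?W = "\<lambda>t. (Top A B p K ^^ t) V"
  let ?g = "\<lambda>t. real CARD('d) ^ 2 * (\<theta> ^ t * trace_pairing P V / q)"
  have "\<forall>t. norm (?W t j) \<le> ?g t"
  proof
    fix t
    have "psd_tuple (?W t)" by (rule psd_tuple_Top_power[OF p_nonneg V])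
    then have "norm (?W t j) \<le> real CARD('d) ^ 2 * trace (?W t j)"
      by (simp add: psd_tuple_def psd_mat_norm_le_trace)
    also have "\<dots> \<le> ?g t"
      using trace_Top_power_le_Lyapunov[OF p_nonneg V less_imp_le[OF q] P_ge \<theta>(1) contr, of t j] q
      by (intro mult_left_mono) (simp_all add: pos_le_divide_eq mult.commute)
    finally show "norm (?W t j) \<le> ?g t" .
  qed
  moreover have "?g \<longlonglongrightarrow> 0"
    using \<theta> by (intro tendsto_mult_right_zero tendsto_divide_zero tendsto_mult_left_zero LIMSEQ_power_zero)
      simp
  ultimately show "(\<lambda>t. ?W t j) \<longlonglongrightarrow> 0"
    by (rule Lim_null_comparison[OF always_eventually])
qed

context mjls_lq
begin

definition npg_step :: "real \<Rightarrow> ('s \<Rightarrow> real^'d^'k) \<Rightarrow> 's \<Rightarrow> real^'d^'k" where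
  "npg_step \<eta> K = (\<lambda>i. K i - (2 * \<eta>) *\<^sub>R Lk K i)"

lemma npg_iter_Suc: "npg_iter A B p Q R \<eta> K0 (Suc n) = npg_step \<eta> (npg_iter A B p Q R \<eta> K0 n)"
  by (simp add: npg_step_def)

context
  fixes K :: "'s \<Rightarrow> real^'d^'k" and \<eta> :: real
  assumes stable: "ms_stable A B p K" and \<eta>_pos: "0 < \<eta>"
    and \<eta>_small: "\<And>i. 2 * \<eta> * spec_norm (Mk K i) \<le> 1"
begin

lemma quad_form_advantage_npg_step:
  "quad_form (advantage K (npg_step \<eta> K) i) x \<le> - 2 * \<eta> * (norm (Lk K i *v x))\<^sup>2"
proof -
  let ?l = "Lk K i *v x"
  have "(npg_step \<eta> K i - K i) *v x = (- (2 * \<eta>)) *\<^sub>R ?l"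
    by (simp add: npg_step_def matrix_vector_mult_uminus_left matrix_vector_mult_scaleR_left)
  then have "quad_form (advantage K (npg_step \<eta> K) i) x
      = - 4 * \<eta> * (norm ?l)\<^sup>2 + (2 * \<eta>)\<^sup>2 * quad_form (Mk K i) ?l"
    by (simp add: quad_form_advantage[OF stable] quad_form_uminus_vector quad_form_scaleR_vector
        power2_norm_eq_inner)
  moreover have "(2 * \<eta>)\<^sup>2 * quad_form (Mk K i) ?l \<le> (2 * \<eta>) * ((2 * \<eta> * spec_norm (Mk K i)) * (norm ?l)\<^sup>2)"
    using quad_form_le_spec_norm[of "Mk K i" ?l] \<eta>_pos
    by (simp add: power2_eq_square mult_left_mono mult.assoc)
  moreover have "(2 * \<eta> * spec_norm (Mk K i)) * (norm ?l)\<^sup>2 \<le> (norm ?l)\<^sup>2"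
    using \<eta>_small[of i] \<eta>_pos spec_norm_nonneg[of "Mk K i"] by (intro mult_left_le_one_le) auto
  then have "(2 * \<eta>) * ((2 * \<eta> * spec_norm (Mk K i)) * (norm ?l)\<^sup>2) \<le> (2 * \<eta>) * (norm ?l)\<^sup>2"
    using \<eta>_pos by (intro mult_left_mono) auto
  ultimately show ?thesis by linarith
qed

lemma quad_form_Top_adj_npg_step_le:
  "quad_form (Top_adj A B p (npg_step \<eta> K) (Pk K) i) x \<le> quad_form (Pk K i) x - Lambda_min Q * (norm x)\<^sup>2"
proof -
  let ?K' = "npg_step \<eta> K"
  have "- 2 * \<eta> * (norm (Lk K i *v x))\<^sup>2 \<le> 0" using \<eta>_pos by simp
  then have "quad_form (advantage K ?K' i) x \<le> 0"
    using quad_form_advantage_npg_step[of i x] by linarith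
  moreover have "0 \<le> quad_form (R i) (?K' i *v x)"
    by (rule psd_mat_quad_form_nonneg[OF pd_imp_psd_mat[OF R_pd]])
  then have "Lambda_min Q * (norm x)\<^sup>2 \<le> quad_form (stage_cost Q R ?K' i) x"
    using quad_form_Q_ge[of x i] by (simp add: quad_form_stage_cost)
  ultimately show ?thesis by (simp add: advantage_def quad_form_add quad_form_diff)
qed

text \<open>\<open>P\<^sup>K\<close> is a Lyapunov function for the updated gain, with contraction factor
  \<open>1 - \<Lambda>\<^sub>m\<^sub>i\<^sub>n(Q) / b\<close> where \<open>P\<^sup>K \<le> b I\<close>.\<close>

lemma ms_stable_npg_step: "ms_stable A B p (npg_step \<eta> K)"
proof -
  let ?P = "Pk K"
  define q where "q = Lambda_min Q"
  define b where "b = (\<Sum>j\<in>UNIV. spec_norm (?P j))"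
  have q0: "0 < q" using Lambda_min_pos[of Q] Q_pd by (simp add: q_def)
  have P_ge: "q * (norm x)\<^sup>2 \<le> quad_form (?P i) x" for i x
    using order_trans[OF quad_form_Q_ge quad_form_Q_le_Pk[OF stable]] by (simp add: q_def)
  have P_le: "quad_form (?P i) x \<le> b * (norm x)\<^sup>2" for i x
    unfolding b_def by (intro quad_form_le_spec_norm_bound member_le_sum) (auto simp: spec_norm_nonneg)
  have "q * (norm (axis undefined 1 :: real^'d))\<^sup>2 \<le> b * (norm (axis undefined 1 :: real^'d))\<^sup>2"
    using P_ge P_le by (rule order_trans)
  then have qb: "q \<le> b" by (simp add: norm_axis_1)
  have contr: "quad_form (Top_adj A B p (npg_step \<eta> K) ?P i) x \<le> (1 - q / b) * quad_form (?P i) x" for i x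
  proof -
    have "0 \<le> q / b" using q0 qb by simp
    moreover have "quad_form (?P i) x \<le> b * (norm x)\<^sup>2" by (rule P_le)
    ultimately have "q / b * quad_form (?P i) x \<le> q / b * (b * (norm x)\<^sup>2)"
      by (rule mult_left_mono[rotated])
    also have "\<dots> = q * (norm x)\<^sup>2" using q0 qb by simp
    finally show ?thesis
      using quad_form_Top_adj_npg_step_le[of i x] by (simp add: q_def algebra_simps)
  qed
  from q0 qb have \<theta>: "0 \<le> 1 - q / b" "1 - q / b < 1" by auto
  show ?thesis by (rule ms_stable_of_Lyapunov_contraction[OF _ q0 P_ge \<theta> contr]) (rule p_nonneg)
qed

lemma npg_step_descent: "C (npg_step \<eta> K) - C K \<le> - 2 * \<eta> * \<mu> * Lk_frob_sq K"
proof -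
  let ?K' = "npg_step \<eta> K" and ?N = "\<lambda>i. transpose (Lk K i) ** Lk K i"
  have stable': "ms_stable A B p ?K'" by (rule ms_stable_npg_step)
  have X: "psd_mat (Xk ?K' i)" for i using psd_tuple_Xk[OF stable'] by (simp add: psd_tuple_def)
  have "trace (advantage K ?K' i ** Xk ?K' i) \<le> - 2 * \<eta> * \<mu> * trace (?N i)" for i
  proof -
    have "trace (advantage K ?K' i ** Xk ?K' i) \<le> trace (((- 2 * \<eta>) *\<^sub>R ?N i) ** Xk ?K' i)"
    proof (rule trace_mult_psd_mono[OF X])
      fix x
      have "quad_form ((- 2 * \<eta>) *\<^sub>R ?N i) x = - 2 * \<eta> * (norm (Lk K i *v x))\<^sup>2"
        by (simp only: quad_form_scaleR quad_form_transpose_mult_self)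
      then show "quad_form (advantage K ?K' i) x \<le> quad_form ((- 2 * \<eta>) *\<^sub>R ?N i) x"
        using quad_form_advantage_npg_step[of i x] by simp
    qed
    also have "\<dots> = - 2 * \<eta> * trace (Xk ?K' i ** ?N i)"
      by (simp only: matrix_scaleR_left trace_scaleR trace_mul_sym[of "?N i"])
    also have "\<dots> \<le> - 2 * \<eta> * (\<mu> * trace (?N i))"
      using trace_mult_psd_ge[OF psd_mat_transpose_mult_self quad_form_Xk_ge[OF stable']] \<eta>_pos
      by (intro mult_left_mono_neg) auto
    finally show ?thesis by simp
  qed
  then have "trace_pairing (advantage K ?K') (Xk ?K') \<le> - 2 * \<eta> * \<mu> * Lk_frob_sq K"
    unfolding trace_pairing_def Lk_frob_sq_def sum_distrib_left by (rule sum_mono)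
  then show ?thesis using cost_difference[OF stable stable'] by simp
qed

lemma npg_step_contraction:
  assumes "ms_stable A B p Kopt"
  shows "C (npg_step \<eta> K) - C Kopt
    \<le> (1 - 2 * \<mu> * Lambda_min R / max_norm (Xk Kopt) * \<eta>) * (C K - C Kopt)"
proof -
  have X0: "0 < max_norm (Xk Kopt)" using mu_pos mu_le_max_norm_Xk[OF assms] by linarith
  have "Lambda_min R / max_norm (Xk Kopt) * (C K - C Kopt) \<le> Lk_frob_sq K"
    using gradient_domination[OF stable assms] Lambda_min_R_pos X0 by (simp add: field_simps)
  then have "2 * \<eta> * \<mu> * (Lambda_min R / max_norm (Xk Kopt) * (C K - C Kopt)) \<le> 2 * \<eta> * \<mu> * Lk_frob_sq K"
    using \<eta>_pos mu_pos by (intro mult_left_mono) auto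
  then have "C (npg_step \<eta> K) - C Kopt
      \<le> (C K - C Kopt) - 2 * \<eta> * \<mu> * (Lambda_min R / max_norm (Xk Kopt) * (C K - C Kopt))"
    using npg_step_descent by simp
  then show ?thesis by (simp add: algebra_simps diff_divide_distrib)
qed

end

end

section \<open>Linear convergence of natural policy gradient\<close>

context mjls_lq
begin

lemma step_size_bound:
  assumes "ms_stable A B p K0" and "0 < \<eta>"
    and "\<eta> \<le> 1/2 * inverse (max_norm R + (max_norm B)\<^sup>2 * C K0 / \<mu>)"
  shows "2 * \<eta> * (max_norm R + (max_norm B)\<^sup>2 * C K0 / \<mu>) \<le> 1"
proof -
  have "0 < max_norm R" using Lambda_min_R_pos Lambda_min_R_le_max_norm by linarith
  moreover have "0 \<le> (max_norm B)\<^sup>2 * C K0 / \<mu>" using cost_nonneg[OF assms(1)] mu_pos by simp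
  ultimately show ?thesis using assms(3) by (simp add: field_simps)
qed

lemma npg_step_size_Mk:
  assumes "ms_stable A B p K0" and "ms_stable A B p K" and "C K \<le> C K0" and "0 < \<eta>"
    and "\<eta> \<le> 1/2 * inverse (max_norm R + (max_norm B)\<^sup>2 * C K0 / \<mu>)"
  shows "2 * \<eta> * spec_norm (Mk K i) \<le> 1"
proof -
  have "(max_norm B)\<^sup>2 * (C K / \<mu>) \<le> (max_norm B)\<^sup>2 * C K0 / \<mu>"
    using assms(3) mu_pos by (simp add: divide_right_mono mult_left_mono)
  then have "spec_norm (Mk K i) \<le> max_norm R + (max_norm B)\<^sup>2 * C K0 / \<mu>"
    using spec_norm_Mk_le[OF assms(2), of i] by linarith
  then have "2 * \<eta> * spec_norm (Mk K i) \<le> 2 * \<eta> * (max_norm R + (max_norm B)\<^sup>2 * C K0 / \<mu>)"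
    using assms(4) by simp
  then show ?thesis using step_size_bound[OF assms(1,4,5)] by linarith
qed

lemma npg_rate_nonneg:
  assumes "ms_stable A B p K0" and "ms_stable A B p Kopt" and "0 < \<eta>"
    and "\<eta> \<le> 1/2 * inverse (max_norm R + (max_norm B)\<^sup>2 * C K0 / \<mu>)"
  shows "0 \<le> 1 - 2 * \<mu> * Lambda_min R / max_norm (Xk Kopt) * \<eta>"
proof -
  have X: "\<mu> \<le> max_norm (Xk Kopt)" by (rule mu_le_max_norm_Xk[OF assms(2)])
  have "0 \<le> (max_norm B)\<^sup>2 * C K0 / \<mu>" using cost_nonneg[OF assms(1)] mu_pos by simp
  then have "Lambda_min R \<le> max_norm R + (max_norm B)\<^sup>2 * C K0 / \<mu>"
    using Lambda_min_R_le_max_norm by linarith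
  then have "2 * \<eta> * Lambda_min R \<le> 2 * \<eta> * (max_norm R + (max_norm B)\<^sup>2 * C K0 / \<mu>)"
    using assms(3) by simp
  then have "2 * \<eta> * Lambda_min R \<le> 1" using step_size_bound[OF assms(1,3,4)] by linarith
  moreover have "\<mu> / max_norm (Xk Kopt) \<le> 1" using X mu_pos by simp
  ultimately have "\<mu> / max_norm (Xk Kopt) * (2 * \<eta> * Lambda_min R) \<le> 1 * 1"
    using mu_pos X Lambda_min_R_pos assms(3) by (intro mult_mono) auto
  then show ?thesis by (simp add: field_simps)
qed

text \<open>Every iterate costs at most \<open>C(K\<^sup>0)\<close>, so the step size condition, stated for \<open>K\<^sup>0\<close>,
  keeps holding along the iteration.\<close>

lemma npg_iter_linear_convergence:
  assumes st0: "ms_stable A B p K0" and st_opt: "ms_stable A B p Kopt"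
    and opt: "\<And>K. ms_stable A B p K \<Longrightarrow> C Kopt \<le> C K"
    and \<eta>_pos: "0 < \<eta>" and \<eta>_le: "\<eta> \<le> 1/2 * inverse (max_norm R + (max_norm B)\<^sup>2 * C K0 / \<mu>)"
  shows "ms_stable A B p (npg_iter A B p Q R \<eta> K0 n) \<and>
    C (npg_iter A B p Q R \<eta> K0 n) - C Kopt
      \<le> (1 - 2 * \<mu> * Lambda_min R / max_norm (Xk Kopt) * \<eta>) ^ n * (C K0 - C Kopt)"
proof (induction n)
  case 0
  then show ?case using st0 by simp
next
  case (Suc n)
  let ?K = "npg_iter A B p Q R \<eta> K0 n" and ?\<rho> = "1 - 2 * \<mu> * Lambda_min R / max_norm (Xk Kopt) * \<eta>"
  have stable: "ms_stable A B p ?K" and IH: "C ?K - C Kopt \<le> ?\<rho> ^ n * (C K0 - C Kopt)"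
    using Suc by auto
  have \<rho>: "0 \<le> ?\<rho>" "?\<rho> \<le> 1"
    using npg_rate_nonneg[OF st0 st_opt \<eta>_pos \<eta>_le] mu_pos Lambda_min_R_pos
      mu_le_max_norm_Xk[OF st_opt] \<eta>_pos by auto
  have "?\<rho> ^ n * (C K0 - C Kopt) \<le> C K0 - C Kopt"
    using \<rho> opt[OF st0] by (simp add: mult_left_le_one_le power_le_one)
  then have "C ?K \<le> C K0" using IH by linarith
  then have small: "2 * \<eta> * spec_norm (Mk ?K i) \<le> 1" for i
    by (rule npg_step_size_Mk[OF st0 stable _ \<eta>_pos \<eta>_le])
  have "C (npg_step \<eta> ?K) - C Kopt \<le> ?\<rho> * (C ?K - C Kopt)"
    by (rule npg_step_contraction[OF stable \<eta>_pos small st_opt])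
  also have "\<dots> \<le> ?\<rho> * (?\<rho> ^ n * (C K0 - C Kopt))" using IH \<rho>(1) by (rule mult_left_mono)
  finally show ?case
    unfolding npg_iter_Suc using ms_stable_npg_step[OF stable \<eta>_pos small] by simp
qed

end

theorem theorem3:
  fixes A :: "'s::finite \<Rightarrow> real^'d::finite^'d"
    and B :: "'s \<Rightarrow> real^'k::finite^'d"
    and p :: "'s \<Rightarrow> 's \<Rightarrow> real"
    and \<pi> :: "'s \<Rightarrow> real"
    and \<Sigma> :: "real^'d^'d"
    and Q :: "'s \<Rightarrow> real^'d^'d"
    and R :: "'s \<Rightarrow> real^'k^'k"
    and K0 Kopt :: "'s \<Rightarrow> real^'d^'k"
    and \<eta> :: real
  assumes p_nonneg: "\<And>i j. 0 \<le> p i j"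
    and p_stoch: "\<And>i. (\<Sum>j\<in>UNIV. p i j) = 1"
    and pi_pos: "\<And>i. 0 < \<pi> i"
    and pi_sum: "(\<Sum>i\<in>UNIV. \<pi> i) = 1"
    and Sigma_pd: "pd_mat \<Sigma>"
    and Q_pd: "\<And>i. pd_mat (Q i)"
    and R_pd: "\<And>i. pd_mat (R i)"
    and stabilizable: "\<exists>K. K \<in> Kset A B p"
    and K0_stab: "K0 \<in> Kset A B p"
    and Kopt_stab: "Kopt \<in> Kset A B p"
    and Kopt_opt: "\<And>K. K \<in> Kset A B p \<Longrightarrow> cost A B p \<pi> \<Sigma> Q R Kopt \<le> cost A B p \<pi> \<Sigma> Q R K"
    and eta_pos: "0 < \<eta>"
    and eta_le: "\<eta> \<le> 1/2 * inverse (max_norm R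
                   + (max_norm B)\<^sup>2 * cost A B p \<pi> \<Sigma> Q R K0 / mu \<pi> \<Sigma>)"
  shows "\<forall>n. npg_iter A B p Q R \<eta> K0 n \<in> Kset A B p \<and>
           cost A B p \<pi> \<Sigma> Q R (npg_iter A B p Q R \<eta> K0 n) - cost A B p \<pi> \<Sigma> Q R Kopt
             \<le> (1 - 2 * mu \<pi> \<Sigma> * Lambda_min R / max_norm (Xmat A B p \<pi> \<Sigma> Kopt) * \<eta>) ^ n
                * (cost A B p \<pi> \<Sigma> Q R K0 - cost A B p \<pi> \<Sigma> Q R Kopt)"
proof -
  interpret mjls_lq A B p \<pi> \<Sigma> Q R
    using p_nonneg p_stoch pi_pos Sigma_pd Q_pd R_pd by unfold_locales
  show ?thesis
    using npg_iter_linear_convergence[of K0 Kopt \<eta>] K0_stab Kopt_stab Kopt_opt eta_pos eta_le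
    by (simp add: Kset_def)
qed

end
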